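(* Let $R$ be a finite commutative chain ring with maximal ideal $\langle a\rangle$, where $a$ has even nilpotency index $t$, and residue field $\mathbb F_q$ of characteristic $p$. Let $e_1,\dots,e_r$ be positive integers not divisible by $p$, $A=R[X_1,\dots,X_r]/\langle X_1^{e_1}-1,\dots,X_r^{e_r}-1\rangle$, and for each $i$ let $H_i$ be the set of $e_i$-th roots of unity in an algebraic closure of $\mathbb F_q$. Then there exists a non-trivial self-dual semisimple abelian code in $A$ if and only if there exists $\mu=(\mu_1,\dots,\mu_r)\in H_1\times\dots\times H_r$ such that $C(\mu)\neq C(\mu^{-1})$, where $\mu^{-1}=(\mu_1^{-1},\dots,\mu_r^{-1})$.
   Context: A semisimple abelian code is an ideal of $A$. Elements of $A$ are identified with coefficient vectors in $R^n$, $n=e_1\cdots e_r$, with respect to the monomial basis $X_1^{i_1}\cdots X_r^{i_r}$, $0\le i_k<e_k$; with $\mathbf x\cdot\mathbf y=\sum_k x_ky_k$, the dual is $\mathcal K^\perp=\{\mathbf x:\mathbf x\cdot\mathbf c=0\ \forall\mathbf c\in\mathcal K\}$ and $\mathcal K$ is self-dual if $\mathcal K=\mathcal K^\perp$. The trivial self-dual code is $\langle a^{t/2}\rangle A$; a non-trivial self-dual code is a self-dual ideal of $A$ different from it. For $\mu\in H_1\times\dots\times H_r$, $C(\mu)=\{(\mu_1^{q^s},\dots,\mu_r^{q^s}):s\in\mathbb N\}$. *)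

theory Defs
  imports "HOL-Computational_Algebra.Polynomial"
begin

definition is_ideal :: "'r::comm_ring_1 set \<Rightarrow> bool" where
  "is_ideal I \<longleftrightarrow> 0 \<in> I \<and> (\<forall>x\<in>I. \<forall>y\<in>I. x + y \<in> I) \<and> (\<forall>x\<in>I. \<forall>r. r * x \<in> I)"

definition principal_ideal :: "'r::comm_ring_1 \<Rightarrow> 'r set" where
  "principal_ideal a = {x * a | x. True}"

definition finite_chain_ring :: "'r::comm_ring_1 itself \<Rightarrow> bool" where
  "finite_chain_ring _ \<longleftrightarrow> finite (UNIV :: 'r set) \<and>
     (\<forall>I J :: 'r set. is_ideal I \<longrightarrow> is_ideal J \<longrightarrow> I \<subseteq> J \<or> J \<subseteq> I)"

definition is_maximal_ideal :: "'r::comm_ring_1 set \<Rightarrow> bool" where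
  "is_maximal_ideal M \<longleftrightarrow> is_ideal M \<and> M \<noteq> UNIV \<and>
     (\<forall>J. is_ideal J \<longrightarrow> M \<subseteq> J \<longrightarrow> J = M \<or> J = UNIV)"

definition nilpotency_index :: "'r::comm_ring_1 \<Rightarrow> nat \<Rightarrow> bool" where
  "nilpotency_index a t \<longleftrightarrow> a ^ t = 0 \<and> (\<forall>k<t. a ^ k \<noteq> 0)"

definition residue_card :: "'r::comm_ring_1 \<Rightarrow> nat" where
  "residue_card a = card ((\<lambda>x. (+) x ` principal_ideal a) ` (UNIV :: 'r set))"

text \<open>Exponent vectors (i_1,...,i_r) with 0 <= i_k < e_k, encoded as functions nat => nat
  which vanish outside {0..<r} (index k here corresponds to X_{k+1}).\<close>
definition exps :: "nat \<Rightarrow> (nat \<Rightarrow> nat) \<Rightarrow> (nat \<Rightarrow> nat) set" where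
  "exps r e = {i. (\<forall>k<r. i k < e k) \<and> (\<forall>k\<ge>r. i k = 0)}"

text \<open>Elements of A: coefficient vectors supported on the monomial basis.\<close>
definition elemsA :: "nat \<Rightarrow> (nat \<Rightarrow> nat) \<Rightarrow> ((nat \<Rightarrow> nat) \<Rightarrow> 'r::comm_ring_1) set" where
  "elemsA r e = {x. \<forall>i. i \<notin> exps r e \<longrightarrow> x i = 0}"

text \<open>Multiplication in A (X_k^{e_k} = 1): convolution modulo the e_k.\<close>
definition mulA :: "nat \<Rightarrow> (nat \<Rightarrow> nat) \<Rightarrow> ((nat \<Rightarrow> nat) \<Rightarrow> 'r::comm_ring_1)
    \<Rightarrow> ((nat \<Rightarrow> nat) \<Rightarrow> 'r) \<Rightarrow> ((nat \<Rightarrow> nat) \<Rightarrow> 'r)" where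
  "mulA r e x y = (\<lambda>m. if m \<in> exps r e then
      (\<Sum>i\<in>exps r e. \<Sum>j\<in>exps r e.
          if (\<forall>k<r. (i k + j k) mod e k = m k) then x i * y j else 0)
    else 0)"

definition idealA :: "nat \<Rightarrow> (nat \<Rightarrow> nat) \<Rightarrow> ((nat \<Rightarrow> nat) \<Rightarrow> 'r::comm_ring_1) set \<Rightarrow> bool" where
  "idealA r e K \<longleftrightarrow> K \<subseteq> elemsA r e \<and> (\<lambda>_. 0) \<in> K \<and>
     (\<forall>x\<in>K. \<forall>y\<in>K. (\<lambda>i. x i + y i) \<in> K) \<and>
     (\<forall>x\<in>K. \<forall>f\<in>elemsA r e. mulA r e f x \<in> K)"

definition dotA :: "nat \<Rightarrow> (nat \<Rightarrow> nat) \<Rightarrow> ((nat \<Rightarrow> nat) \<Rightarrow> 'r::comm_ring_1)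
    \<Rightarrow> ((nat \<Rightarrow> nat) \<Rightarrow> 'r) \<Rightarrow> 'r" where
  "dotA r e x y = (\<Sum>i\<in>exps r e. x i * y i)"

definition dualA :: "nat \<Rightarrow> (nat \<Rightarrow> nat) \<Rightarrow> ((nat \<Rightarrow> nat) \<Rightarrow> 'r::comm_ring_1) set
    \<Rightarrow> ((nat \<Rightarrow> nat) \<Rightarrow> 'r) set" where
  "dualA r e K = {x \<in> elemsA r e. \<forall>c\<in>K. dotA r e x c = 0}"

definition self_dual :: "nat \<Rightarrow> (nat \<Rightarrow> nat) \<Rightarrow> ((nat \<Rightarrow> nat) \<Rightarrow> 'r::comm_ring_1) set \<Rightarrow> bool" where
  "self_dual r e K \<longleftrightarrow> K = dualA r e K"

definition trivial_code :: "nat \<Rightarrow> (nat \<Rightarrow> nat) \<Rightarrow> 'r::comm_ring_1 \<Rightarrow> nat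
    \<Rightarrow> ((nat \<Rightarrow> nat) \<Rightarrow> 'r) set" where
  "trivial_code r e a t = {(\<lambda>i. a ^ (t div 2) * x i) | x. x \<in> elemsA r e}"

text \<open>A semisimple abelian code (p does not divide the e_k) is an ideal of A.\<close>
definition nontrivial_self_dual_code_exists :: "nat \<Rightarrow> (nat \<Rightarrow> nat) \<Rightarrow> 'r::comm_ring_1 \<Rightarrow> nat \<Rightarrow> bool" where
  "nontrivial_self_dual_code_exists r e a t \<longleftrightarrow>
     (\<exists>K. idealA r e K \<and> self_dual r e K \<and> K \<noteq> trivial_code r e a t)"

text \<open>H_1 x ... x H_r, tuples encoded as nat => 'k, equal to 1 outside {0..<r}.\<close>
definition Hprod :: "nat \<Rightarrow> (nat \<Rightarrow> nat) \<Rightarrow> (nat \<Rightarrow> 'k::field) set" where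
  "Hprod r e = {\<mu>. (\<forall>k<r. \<mu> k ^ e k = 1) \<and> (\<forall>k\<ge>r. \<mu> k = 1)}"

definition orbitC :: "nat \<Rightarrow> (nat \<Rightarrow> 'k::field) \<Rightarrow> (nat \<Rightarrow> 'k) set" where
  "orbitC q \<mu> = {(\<lambda>k. \<mu> k ^ (q ^ s)) | s. True}"

definition inv_tuple :: "(nat \<Rightarrow> 'k::field) \<Rightarrow> (nat \<Rightarrow> 'k)" where
  "inv_tuple \<mu> = (\<lambda>k. inverse (\<mu> k))"

text \<open>phi : R -> K is a ring homomorphism with kernel <a> (so its image is the residue field F_q),
  and K is algebraically closed and algebraic over the image: K is an algebraic closure of F_q.\<close>
definition alg_closure_of_residue :: "('r::comm_ring_1 \<Rightarrow> 'k::alg_closed_field) \<Rightarrow> 'r \<Rightarrow> bool" where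
  "alg_closure_of_residue \<phi> a \<longleftrightarrow>
     (\<forall>x y. \<phi> (x + y) = \<phi> x + \<phi> y) \<and> (\<forall>x y. \<phi> (x * y) = \<phi> x * \<phi> y) \<and> \<phi> 1 = 1 \<and>
     {x. \<phi> x = 0} = principal_ideal a \<and>
     (\<forall>z::'k. \<exists>P. P \<noteq> 0 \<and> (\<forall>n. coeff P n \<in> range \<phi>) \<and> poly P z = 0)"

end

theory Submission
  imports Defs "HOL-Library.FuncSet" "HOL-Library.Function_Algebras"
begin

text \<open>
  Since \<open>p\<close> does not divide the \<open>e\<^sub>k\<close>, the Fourier transform
  \<open>F c \<nu> = (\<Sum>\<^sub>g c\<^sub>g \<nu>\<^bsup>g\<^esup>)\<close>, \<open>\<nu> \<in> H\<^sub>1 \<times> \<dots> \<times> H\<^sub>r\<close>, is injective on vectors over the algebraic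
  closure. It turns the product of \<open>A\<close> into pointwise multiplication and the involution
  \<open>x\<^sup>*\<^sub>g = x\<^bsub>-g\<^esub>\<close> into \<open>\<nu> \<mapsto> \<nu>\<^bsup>-1\<^esup>\<close>, and for \<open>\<bbbF>\<^sub>q\<close>-valued \<open>c\<close> it satisfies
  \<open>F c (\<nu>\<^sup>q) = (F c \<nu>)\<^sup>q\<close>. As \<open>x \<cdot> c\<close> is the constant coefficient of \<open>x c\<^sup>*\<close>, the dual of an
  ideal \<open>K\<close> is the annihilator of \<open>K\<^sup>*\<close>.

  If every orbit is symmetric, \<open>C(\<mu>) = C(\<mu>\<^bsup>-1\<^esup>)\<close>, let \<open>x = a\<^sup>k w\<close> lie in a self-dual ideal,
  with \<open>k\<close> maximal. If \<open>k < t/2\<close>, then \<open>x x\<^sup>* = 0\<close> forces \<open>w w\<^sup>* \<equiv> 0\<close> modulo \<open>a\<close>, and the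
  residue \<open>v\<close> of \<open>w\<close> satisfies \<open>F v \<nu> (F v \<nu>)\<^bsup>q^s\<^esup> = F v \<nu> F v (\<nu>\<^bsup>-1\<^esup>) = 0\<close> for all \<open>\<nu>\<close>;
  so \<open>v = 0\<close>, contradicting the maximality of \<open>k\<close>. Hence every self-dual ideal lies in the
  self-dual ideal \<open>a\<^bsup>t/2\<^esup>A\<close>, and so equals it.

  If \<open>C(\<mu>) \<noteq> C(\<mu>\<^bsup>-1\<^esup>)\<close>, these orbits are disjoint, so the element \<open>\<epsilon>\<close> of \<open>\<bbbF>\<^sub>q[G]\<close>
  whose transform is the indicator of \<open>C(\<mu>)\<close> is an idempotent with \<open>\<epsilon> \<epsilon>\<^sup>* = 0\<close>. A power
  of any lift of \<open>\<epsilon>\<close> is an idempotent \<open>f\<close> of \<open>A\<close> with \<open>f f\<^sup>* = 0\<close>, and with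
  \<open>u = 1 - f - f\<^sup>*\<close> the ideal \<open>{x. x f\<^sup>* = 0 \<and> x u \<in> a\<^bsup>t/2\<^esup>A}\<close> is self-dual and contains
  \<open>f \<notin> a\<^bsup>t/2\<^esup>A\<close>.
\<close>

section \<open>The group algebra of a finite abelian group\<close>

definition delta :: "(nat \<Rightarrow> nat) \<Rightarrow> (nat \<Rightarrow> nat) \<Rightarrow> 'a::zero_neq_one" where
  "delta h = (\<lambda>i. if i = h then 1 else 0)"

lemma elemsA_iff: "x \<in> elemsA r e \<longleftrightarrow> (\<forall>i. i \<notin> exps r e \<longrightarrow> x i = 0)"
  by (simp add: elemsA_def)

lemma zero_in_elemsA [simp]: "0 \<in> elemsA r e"
  by (simp add: elemsA_iff)

lemma finite_exps: "finite (exps r e)"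
proof -
  let ?M = "Max (insert 0 (e ` {..<r}))"
  have "exps r e \<subseteq> {i. \<forall>k. (k \<in> {..<r} \<longrightarrow> i k \<in> {..<?M}) \<and> (k \<notin> {..<r} \<longrightarrow> i k = 0)}"
  proof (clarsimp simp: exps_def)
    fix i k assume "\<forall>k<r. i k < e k" "k < r"
    moreover have "e k \<le> ?M" using \<open>k < r\<close> by (intro Max_ge) auto
    ultimately show "i k < ?M" by (meson order_less_le_trans)
  qed
  moreover have "finite {i. \<forall>k. (k \<in> {..<r} \<longrightarrow> i k \<in> {..<?M}) \<and> (k \<notin> {..<r} \<longrightarrow> i k = 0)}"
    by (intro finite_set_of_finite_funs) auto
  ultimately show ?thesis by (rule finite_subset)
qed

lemma finite_elemsA:
  assumes "finite (UNIV :: 'a set)"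
  shows "finite (elemsA r e :: ((nat \<Rightarrow> nat) \<Rightarrow> 'a::comm_ring_1) set)"
proof -
  have "elemsA r e \<subseteq> {x :: _ \<Rightarrow> 'a. \<forall>i. (i \<in> exps r e \<longrightarrow> x i \<in> UNIV) \<and> (i \<notin> exps r e \<longrightarrow> x i = 0)}"
    by (auto simp: elemsA_iff)
  moreover have "finite {x :: _ \<Rightarrow> 'a. \<forall>i. (i \<in> exps r e \<longrightarrow> x i \<in> UNIV) \<and> (i \<notin> exps r e \<longrightarrow> x i = 0)}"
    by (rule finite_set_of_finite_funs) (simp_all add: finite_exps assms)
  ultimately show ?thesis by (rule finite_subset)
qed

text \<open>The exponent vectors form the group \<open>G = \<int>/e\<^sub>1 \<times> \<dots> \<times> \<int>/e\<^sub>r\<close>, and \<open>A\<close> is its group algebra: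
  \<open>mulA\<close> is the convolution over \<open>G\<close>.\<close>

locale group_algebra =
  fixes r :: nat and e :: "nat \<Rightarrow> nat"
  assumes e_pos: "\<forall>k<r. 0 < e k"
begin

abbreviation G :: "(nat \<Rightarrow> nat) set" where "G \<equiv> exps r e"

definition exp_add :: "(nat \<Rightarrow> nat) \<Rightarrow> (nat \<Rightarrow> nat) \<Rightarrow> nat \<Rightarrow> nat" where
  "exp_add i j = (\<lambda>k. if k < r then (i k + j k) mod e k else 0)"

definition exp_neg :: "(nat \<Rightarrow> nat) \<Rightarrow> nat \<Rightarrow> nat" where
  "exp_neg i = (\<lambda>k. if k < r then (e k - i k) mod e k else 0)"

definition exp_diff :: "(nat \<Rightarrow> nat) \<Rightarrow> (nat \<Rightarrow> nat) \<Rightarrow> nat \<Rightarrow> nat" where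
  "exp_diff i j = exp_add i (exp_neg j)"

lemma zero_in_exps [simp]: "0 \<in> G"
  by (simp add: exps_def e_pos)

lemma exp_add_in_exps [simp]: "exp_add i j \<in> G"
  by (simp add: exps_def exp_add_def e_pos)

lemma exp_neg_in_exps [simp]: "exp_neg i \<in> G"
  by (simp add: exps_def exp_neg_def e_pos)

lemma exp_diff_in_exps [simp]: "exp_diff i j \<in> G"
  by (simp add: exp_diff_def)

lemma exp_add_commute: "exp_add i j = exp_add j i"
  by (simp add: exp_add_def fun_eq_iff add.commute)

lemma exp_add_assoc: "exp_add (exp_add i j) l = exp_add i (exp_add j l)"
  by (simp add: exp_add_def fun_eq_iff mod_add_left_eq mod_add_right_eq add.assoc)

lemma exp_add_0 [simp]: "i \<in> G \<Longrightarrow> exp_add i 0 = i"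
  by (auto simp: exp_add_def exps_def fun_eq_iff)

lemma exp_add_neg: "i \<in> G \<Longrightarrow> exp_add i (exp_neg i) = 0"
  by (auto simp: exp_add_def exp_neg_def exps_def fun_eq_iff mod_add_right_eq)

lemma exp_add_eq_iff:
  assumes "i \<in> G" "j \<in> G" "m \<in> G"
  shows "exp_add i j = m \<longleftrightarrow> j = exp_diff m i"
proof
  assume "exp_add i j = m"
  hence "exp_diff m i = exp_add j (exp_add i (exp_neg i))"
    by (metis exp_diff_def exp_add_assoc exp_add_commute)
  thus "j = exp_diff m i" using assms by (simp add: exp_add_neg)
next
  assume "j = exp_diff m i"
  hence "exp_add i j = exp_add m (exp_add i (exp_neg i))"
    by (metis exp_diff_def exp_add_assoc exp_add_commute)
  thus "exp_add i j = m" using assms by (simp add: exp_add_neg)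
qed

lemma exp_add_diff [simp]: "i \<in> G \<Longrightarrow> m \<in> G \<Longrightarrow> exp_add i (exp_diff m i) = m"
  using exp_add_eq_iff[of i "exp_diff m i" m] by simp

lemma exp_diff_add [simp]: "i \<in> G \<Longrightarrow> h \<in> G \<Longrightarrow> exp_diff (exp_add i h) i = h"
  using exp_add_eq_iff[of i h "exp_add i h"] by simp

lemma exp_diff_diff [simp]: "i \<in> G \<Longrightarrow> m \<in> G \<Longrightarrow> exp_diff m (exp_diff m i) = i"
  using exp_add_eq_iff[of "exp_diff m i" i m] by (simp add: exp_add_commute[of _ i])

lemma exp_diff_0 [simp]: "i \<in> G \<Longrightarrow> exp_diff i 0 = i"
  using exp_add_eq_iff[of 0 i i] by (simp add: exp_add_commute[of 0])

lemma exp_diff_eq_0_iff: "i \<in> G \<Longrightarrow> j \<in> G \<Longrightarrow> exp_diff i j = 0 \<longleftrightarrow> i = j"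
  using exp_add_eq_iff[of j 0 i] by auto

lemma exp_neg_unique: "i \<in> G \<Longrightarrow> j \<in> G \<Longrightarrow> exp_add i j = 0 \<Longrightarrow> j = exp_neg i"
  using exp_add_eq_iff[of i j 0] by (simp add: exp_diff_def exp_add_commute[of 0])

lemma exp_neg_neg [simp]: "i \<in> G \<Longrightarrow> exp_neg (exp_neg i) = i"
  using exp_neg_unique[of "exp_neg i" i] exp_add_neg[of i] by (simp add: exp_add_commute)

lemma exp_neg_add: "h \<in> G \<Longrightarrow> i \<in> G \<Longrightarrow> exp_neg (exp_add h i) = exp_add (exp_neg h) (exp_neg i)"
proof -
  assume "h \<in> G" "i \<in> G"
  have "exp_add (exp_add h i) (exp_add (exp_neg h) (exp_neg i))
      = exp_add (exp_add h (exp_neg h)) (exp_add i (exp_neg i))"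
    by (metis exp_add_assoc exp_add_commute)
  also have "\<dots> = 0" using \<open>h \<in> G\<close> \<open>i \<in> G\<close> by (simp add: exp_add_neg)
  finally show ?thesis using exp_neg_unique[of "exp_add h i" "exp_add (exp_neg h) (exp_neg i)"] by simp
qed

lemma exp_neg_diff: "h \<in> G \<Longrightarrow> i \<in> G \<Longrightarrow> exp_neg (exp_diff h i) = exp_diff i h"
  by (simp add: exp_diff_def exp_neg_add exp_add_commute)

lemma exp_diff_add_right:
  "j \<in> G \<Longrightarrow> l \<in> G \<Longrightarrow> exp_diff m (exp_add j l) = exp_diff (exp_diff m j) l"
  by (simp add: exp_diff_def exp_neg_add exp_add_assoc)

lemma sum_exps_reindex_diff: "m \<in> G \<Longrightarrow> (\<Sum>i\<in>G. f (exp_diff m i)) = (\<Sum>i\<in>G. f i)"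
  by (rule sum.reindex_bij_witness[of _ "exp_diff m" "exp_diff m"]) auto

lemma sum_exps_reindex_add: "h \<in> G \<Longrightarrow> (\<Sum>i\<in>G. f (exp_add i h)) = (\<Sum>i\<in>G. f i)"
  by (rule sum.reindex_bij_witness[of _ "\<lambda>i. exp_diff i h" "\<lambda>i. exp_add i h"])
     (auto simp: exp_add_commute[of _ h])

lemma sum_exps_reindex_neg: "(\<Sum>i\<in>G. f (exp_neg i)) = (\<Sum>i\<in>G. f i)"
  by (rule sum.reindex_bij_witness[of _ exp_neg exp_neg]) auto

abbreviation mult_A :: "((nat \<Rightarrow> nat) \<Rightarrow> 'a::comm_ring_1) \<Rightarrow> ((nat \<Rightarrow> nat) \<Rightarrow> 'a) \<Rightarrow> (nat \<Rightarrow> nat) \<Rightarrow> 'a"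
    (infixl \<open>\<odot>\<close> 70) where
  "x \<odot> y \<equiv> mulA r e x y"

abbreviation one_A :: "(nat \<Rightarrow> nat) \<Rightarrow> 'a::comm_ring_1" where
  "one_A \<equiv> delta 0"

lemma mulA_eq: "x \<odot> y = (\<lambda>m. if m \<in> G then \<Sum>i\<in>G. x i * y (exp_diff m i) else 0)"
proof (rule ext)
  fix m
  have "(\<forall>k<r. (i k + j k) mod e k = m k) \<longleftrightarrow> exp_add i j = m" if "m \<in> G" for i j
    using that by (auto simp: exp_add_def exps_def fun_eq_iff)
  hence "(\<forall>k<r. (i k + j k) mod e k = m k) \<longleftrightarrow> j = exp_diff m i"
    if "i \<in> G" "j \<in> G" "m \<in> G" for i j
    using that exp_add_eq_iff by blast
  thus "(x \<odot> y) m = (if m \<in> G then \<Sum>i\<in>G. x i * y (exp_diff m i) else 0)"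
    by (simp add: mulA_def finite_exps cong: sum.cong if_cong)
qed

lemma mulA_in_elemsA [simp]: "x \<odot> y \<in> elemsA r e"
  by (simp add: elemsA_iff mulA_eq)

lemma delta_in_elemsA [simp]: "h \<in> G \<Longrightarrow> delta h \<in> elemsA r e"
  by (simp add: elemsA_iff delta_def)

lemma mulA_commute: "x \<odot> y = y \<odot> x"
proof -
  have "(\<Sum>i\<in>G. x i * y (exp_diff m i)) = (\<Sum>i\<in>G. y i * x (exp_diff m i))" if "m \<in> G" for m
    using sum_exps_reindex_diff[OF that, of "\<lambda>i. x i * y (exp_diff m i)"] that
    by (simp add: mult.commute cong: sum.cong)
  thus ?thesis by (simp add: mulA_eq fun_eq_iff)
qed

lemma mulA_assoc: "x \<odot> y \<odot> z = x \<odot> (y \<odot> z)"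
proof -
  have "(\<Sum>i\<in>G. (\<Sum>j\<in>G. x j * y (exp_diff i j)) * z (exp_diff m i))
      = (\<Sum>j\<in>G. x j * (\<Sum>l\<in>G. y l * z (exp_diff (exp_diff m j) l)))" if "m \<in> G" for m
  proof -
    have inner: "(\<Sum>i\<in>G. y (exp_diff i j) * z (exp_diff m i))
        = (\<Sum>l\<in>G. y l * z (exp_diff (exp_diff m j) l))" if "j \<in> G" for j
      using sum_exps_reindex_add[OF that, of "\<lambda>i. y (exp_diff i j) * z (exp_diff m i)"] that
      by (simp add: exp_add_commute[of _ j] exp_diff_add_right cong: sum.cong)
    have "(\<Sum>i\<in>G. (\<Sum>j\<in>G. x j * y (exp_diff i j)) * z (exp_diff m i))
        = (\<Sum>j\<in>G. x j * (\<Sum>i\<in>G. y (exp_diff i j) * z (exp_diff m i)))"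
      by (simp add: sum_distrib_left sum_distrib_right mult.assoc) (rule sum.swap)
    also have "\<dots> = (\<Sum>j\<in>G. x j * (\<Sum>l\<in>G. y l * z (exp_diff (exp_diff m j) l)))"
      using inner by (simp cong: sum.cong)
    finally show ?thesis .
  qed
  thus ?thesis by (simp add: mulA_eq fun_eq_iff)
qed

lemma mulA_left_commute: "x \<odot> (y \<odot> z) = y \<odot> (x \<odot> z)"
  by (metis mulA_assoc mulA_commute)

lemma mulA_mulA_swap: "x \<odot> y \<odot> (z \<odot> w) = x \<odot> z \<odot> (y \<odot> w)"
  by (simp only: mulA_assoc mulA_left_commute[of y z])

lemma delta_mulA: "h \<in> G \<Longrightarrow> delta h \<odot> c = (\<lambda>i. if i \<in> G then c (exp_diff i h) else 0)"
  by (simp add: mulA_eq delta_def finite_exps if_distrib[of "\<lambda>u. u * _"] cong: if_cong)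

lemma one_A_mulA [simp]: "x \<in> elemsA r e \<Longrightarrow> one_A \<odot> x = x"
  by (auto simp: delta_mulA elemsA_iff)

lemma mulA_one_A [simp]: "x \<in> elemsA r e \<Longrightarrow> x \<odot> one_A = x"
  by (subst mulA_commute) simp

lemma mulA_add_left: "(x + y) \<odot> z = x \<odot> z + y \<odot> z"
  by (simp add: mulA_eq fun_eq_iff distrib_right sum.distrib)

lemma mulA_diff_left: "(x - y) \<odot> z = x \<odot> z - y \<odot> z"
  by (simp add: mulA_eq fun_eq_iff left_diff_distrib sum_subtractf)

lemma mulA_scale_left: "(\<lambda>i. c * x i) \<odot> z = (\<lambda>i. c * (x \<odot> z) i)"
  by (simp add: mulA_eq fun_eq_iff sum_distrib_left mult.assoc)

lemma mulA_0_left [simp]: "0 \<odot> z = 0"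
  by (simp add: mulA_eq fun_eq_iff)

lemma mulA_add_right: "z \<odot> (x + y) = z \<odot> x + z \<odot> y"
  by (simp only: mulA_commute[of z] mulA_add_left)

lemma mulA_diff_right: "z \<odot> (x - y) = z \<odot> x - z \<odot> y"
  by (simp only: mulA_commute[of z] mulA_diff_left)

lemma mulA_scale_right: "z \<odot> (\<lambda>i. c * x i) = (\<lambda>i. c * (z \<odot> x) i)"
  by (simp only: mulA_commute[of z] mulA_scale_left)

lemma mulA_0_right [simp]: "z \<odot> 0 = 0"
  by (simp only: mulA_commute[of z] mulA_0_left)

definition invol :: "((nat \<Rightarrow> nat) \<Rightarrow> 'a::comm_ring_1) \<Rightarrow> (nat \<Rightarrow> nat) \<Rightarrow> 'a" where
  "invol x = (\<lambda>g. if g \<in> G then x (exp_neg g) else 0)"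

lemma invol_in_elemsA [simp]: "invol x \<in> elemsA r e"
  by (simp add: elemsA_iff invol_def)

lemma invol_invol [simp]: "x \<in> elemsA r e \<Longrightarrow> invol (invol x) = x"
  by (auto simp: invol_def elemsA_iff)

lemma exp_neg_eq_0_iff: "g \<in> G \<Longrightarrow> exp_neg g = 0 \<longleftrightarrow> g = 0"
proof -
  assume "g \<in> G"
  have "exp_neg 0 = 0" using exp_neg_unique[of 0 0] by simp
  thus ?thesis using exp_neg_neg[OF \<open>g \<in> G\<close>] by metis
qed

lemma invol_one_A [simp]: "invol one_A = one_A"
  by (rule ext) (auto simp: invol_def delta_def exp_neg_eq_0_iff)

lemma invol_diff: "invol (x - y) = invol x - invol y"
  by (simp add: invol_def fun_eq_iff)

lemma invol_scale: "invol (\<lambda>i. c * x i) = (\<lambda>i. c * invol x i)"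
  by (simp add: invol_def fun_eq_iff)

lemma invol_0 [simp]: "invol 0 = 0"
  by (simp add: invol_def fun_eq_iff)

lemma exp_diff_neg: "m \<in> G \<Longrightarrow> i \<in> G \<Longrightarrow> exp_diff (exp_neg m) (exp_neg i) = exp_neg (exp_diff m i)"
  unfolding exp_diff_def by (simp add: exp_neg_add)

lemma invol_mulA: "invol (x \<odot> y) = invol x \<odot> invol y"
proof -
  have "(\<Sum>i\<in>G. x i * y (exp_diff (exp_neg m) i))
      = (\<Sum>i\<in>G. x (exp_neg i) * y (exp_neg (exp_diff m i)))" if "m \<in> G" for m
    using sum_exps_reindex_neg[of "\<lambda>i. x i * y (exp_diff (exp_neg m) i)"] that
    by (simp add: exp_diff_neg cong: sum.cong)
  thus ?thesis by (simp add: invol_def mulA_eq fun_eq_iff)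
qed

lemma dotA_delta_mulA: "h \<in> G \<Longrightarrow> dotA r e x (delta h \<odot> c) = (x \<odot> invol c) h"
proof -
  assume "h \<in> G"
  hence "dotA r e x (delta h \<odot> c) = (\<Sum>i\<in>G. x i * c (exp_diff i h))"
    by (simp add: dotA_def delta_mulA)
  also have "\<dots> = (x \<odot> invol c) h"
    using \<open>h \<in> G\<close> by (simp add: mulA_eq invol_def exp_neg_diff cong: sum.cong)
  finally show ?thesis .
qed

lemma dotA_eq_mulA_invol: "c \<in> elemsA r e \<Longrightarrow> dotA r e x c = (x \<odot> invol c) 0"
  using dotA_delta_mulA[of 0 x c] by simp

lemma dualA_of_idealA:
  assumes "idealA r e K"
  shows "x \<in> dualA r e K \<longleftrightarrow> x \<in> elemsA r e \<and> (\<forall>c\<in>K. x \<odot> invol c = 0)"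
proof -
  have "(\<forall>c\<in>K. dotA r e x c = 0) \<longleftrightarrow> (\<forall>c\<in>K. x \<odot> invol c = 0)"
  proof safe
    fix c assume "\<forall>c\<in>K. dotA r e x c = 0" "c \<in> K"
    hence "(x \<odot> invol c) h = 0" if "h \<in> G" for h
      using that assms dotA_delta_mulA[of h x c] delta_in_elemsA[OF that]
      by (simp add: idealA_def)
    thus "x \<odot> invol c = 0" by (auto simp: mulA_eq fun_eq_iff)
  next
    fix c assume "\<forall>c\<in>K. x \<odot> invol c = 0" "c \<in> K"
    moreover have "c \<in> elemsA r e" using \<open>c \<in> K\<close> assms by (auto simp: idealA_def)
    ultimately show "dotA r e x c = 0" by (simp add: dotA_eq_mulA_invol)
  qed
  thus ?thesis by (simp add: dualA_def)
qed

end


section \<open>Characters and the Fourier transform\<close>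

lemma power_fun_apply [simp]: "(f ^ n) x = f x ^ n"
  by (induction n) simp_all

lemma power_mod_eq_if_power_eq_1:
  assumes "(z::'a::monoid_mult) ^ m = 1"
  shows "z ^ (n mod m) = z ^ n"
proof -
  have "z ^ n = z ^ (m * (n div m) + n mod m)" by simp
  also have "\<dots> = z ^ (n mod m)" by (simp only: power_add power_mult assms power_one mult_1_left)
  finally show ?thesis by simp
qed

lemma roots_unity_polynomial: "{z::'a::comm_ring_1. poly (monom 1 n - 1) z = 0} = {z. z ^ n = 1}"
  by (simp add: poly_monom)

lemma degree_unity_polynomial: "n > 0 \<Longrightarrow> degree (monom (1::'a::field) n - 1) = n"
  using degree_add_eq_left[of "-1" "monom (1::'a) n"] by (simp add: degree_monom_eq)

lemma unity_polynomial_nonzero: "n > 0 \<Longrightarrow> monom (1::'a::field) n - 1 \<noteq> 0"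
  using degree_unity_polynomial[of n] by (metis degree_0 less_not_refl)

lemma finite_roots_of_unity: "n > 0 \<Longrightarrow> finite {z::'a::field. z ^ n = 1}"
  using poly_roots_finite[OF unity_polynomial_nonzero] by (simp only: roots_unity_polynomial)

lemma card_roots_of_unity_le: "n > 0 \<Longrightarrow> card {z::'a::field. z ^ n = 1} \<le> n"
  using card_poly_roots_bound[OF unity_polynomial_nonzero]
  by (simp only: roots_unity_polynomial degree_unity_polynomial)

lemma card_roots_separable:
  fixes P :: "'k::alg_closed_field poly"
  assumes "P \<noteq> 0" "\<And>z. poly P z = 0 \<Longrightarrow> poly (pderiv P) z \<noteq> 0"
  shows "card {z. poly P z = 0} = degree P"
  using assms
proof (induction "degree P" arbitrary: P rule: less_induct)
  case (less P)
  show ?case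
  proof (cases "degree P = 0")
    case True
    then obtain c where "P = [:c:]" by (auto elim: degree_eq_zeroE)
    hence "{z. poly P z = 0} = {}" using less.prems by auto
    thus ?thesis using True by simp
  next
    case False
    then obtain z where z: "poly P z = 0" using alg_closed_imp_poly_has_root by blast
    hence "[:-z, 1:] dvd P" using poly_eq_0_iff_dvd by blast
    then obtain Q where Q: "P = [:-z, 1:] * Q" by (elim dvdE)
    have Q0: "Q \<noteq> 0" using less.prems Q by auto
    have deg: "degree P = Suc (degree Q)" unfolding Q using Q0 by (subst degree_mult_eq) auto
    have dP: "pderiv P = Q + [:-z, 1:] * pderiv Q"
      unfolding Q pderiv_mult by (simp add: pderiv_pCons)
    have Qz: "poly Q z \<noteq> 0" using less.prems(2)[OF z] dP by simp
    have Qsep: "poly (pderiv Q) w \<noteq> 0" if "poly Q w = 0" for w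
    proof -
      have "poly P w = 0" using that Q by simp
      hence "poly (pderiv P) w \<noteq> 0" using less.prems(2) by blast
      thus ?thesis using dP that by auto
    qed
    have IH: "card {w. poly Q w = 0} = degree Q"
      using less.hyps[of Q] deg Q0 Qsep by auto
    have roots: "{w. poly P w = 0} = insert z {w. poly Q w = 0}"
      using Q by auto
    have "finite {w. poly Q w = 0}" using Q0 poly_roots_finite by blast
    hence "card {w. poly P w = 0} = Suc (card {w. poly Q w = 0})"
      unfolding roots using Qz by simp
    thus ?thesis using IH deg by simp
  qed
qed

lemma card_roots_of_unity:
  assumes "n > 0" "\<not> CHAR('a) dvd n"
  shows "card {z::'a::alg_closed_field. z ^ n = 1} = n"
proof -
  have "(of_nat n :: 'a) \<noteq> 0" using assms(2) by (simp add: of_nat_eq_0_iff_char_dvd)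
  hence "poly (pderiv (monom 1 n - 1)) z \<noteq> 0" if "poly (monom 1 n - 1) z = 0" for z :: 'a
    using that \<open>n > 0\<close> by (auto simp: pderiv_diff pderiv_monom poly_monom power_0_left)
  hence "card {z::'a. poly (monom 1 n - 1) z = 0} = n"
    using card_roots_separable[of "monom (1::'a) n - 1"] degree_unity_polynomial[OF \<open>n > 0\<close>]
    by force
  thus ?thesis by (simp only: roots_unity_polynomial)
qed

lemma card_funs_lessThan_const:
  fixes r :: nat
  assumes "\<And>k. k < r \<Longrightarrow> finite (B k)"
  shows "card {f. (\<forall>k<r. f k \<in> B k) \<and> (\<forall>k\<ge>r. f k = d)} = (\<Prod>k<r. card (B k))"
    and "finite {f. (\<forall>k<r. f k \<in> B k) \<and> (\<forall>k\<ge>r. f k = d)}"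
proof -
  let ?ext = "\<lambda>f k. if k < r then f k else d"
  have eq: "{f. (\<forall>k<r. f k \<in> B k) \<and> (\<forall>k\<ge>r. f k = d)} = ?ext ` (PiE {..<r} B)"
  proof (intro equalityI subsetI)
    fix f assume f: "f \<in> {f. (\<forall>k<r. f k \<in> B k) \<and> (\<forall>k\<ge>r. f k = d)}"
    have "f k = ?ext (restrict f {..<r}) k" for k
    proof (cases "k < r")
      case False thus ?thesis using f by simp
    qed simp
    hence "f = ?ext (restrict f {..<r})" by blast
    moreover have "restrict f {..<r} \<in> PiE {..<r} B" using f by auto
    ultimately show "f \<in> ?ext ` (PiE {..<r} B)" by blast
  next
    fix f assume "f \<in> ?ext ` (PiE {..<r} B)"
    then obtain g where g: "g \<in> PiE {..<r} B" "f = ?ext g" by blast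
    have "\<forall>k<r. f k \<in> B k" using g by (auto simp: PiE_iff)
    moreover have "\<forall>k\<ge>r. f k = d" using g by simp
    ultimately show "f \<in> {f. (\<forall>k<r. f k \<in> B k) \<and> (\<forall>k\<ge>r. f k = d)}" by simp
  qed
  have inj: "inj_on ?ext (PiE {..<r} B)"
  proof (rule inj_onI)
    fix f g assume f: "f \<in> PiE {..<r} B" and g: "g \<in> PiE {..<r} B" and h: "?ext f = ?ext g"
    show "f = g"
    proof (rule PiE_ext[OF f g])
      fix k assume "k \<in> {..<r}"
      thus "f k = g k" using fun_cong[OF h, of k] by simp
    qed
  qed
  have fin: "finite (PiE {..<r} B)" using assms by (intro finite_PiE) auto
  show "card {f. (\<forall>k<r. f k \<in> B k) \<and> (\<forall>k\<ge>r. f k = d)} = (\<Prod>k<r. card (B k))"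
    unfolding eq card_image[OF inj] by (simp add: card_PiE)
  show "finite {f. (\<forall>k<r. f k \<in> B k) \<and> (\<forall>k\<ge>r. f k = d)}"
    unfolding eq using fin by simp
qed

lemma card_exps: "card (exps r e) = (\<Prod>k<r. e k)"
proof -
  have "exps r e = {f. (\<forall>k<r. f k \<in> {..<e k}) \<and> (\<forall>k\<ge>r. f k = 0)}"
    by (auto simp: exps_def)
  thus ?thesis using card_funs_lessThan_const(1)[of r "\<lambda>k. {..<e k}" 0] by simp
qed

lemma Hprod_eq: "Hprod r e = {f. (\<forall>k<r. f k \<in> {z. z ^ e k = 1}) \<and> (\<forall>k\<ge>r. f k = 1)}"
  by (auto simp: Hprod_def)

lemma inv_tuple_in_Hprod: "\<nu> \<in> Hprod r e \<Longrightarrow> inv_tuple \<nu> \<in> Hprod r e"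
  by (simp add: Hprod_def inv_tuple_def power_inverse)

lemma power_in_Hprod:
  assumes "\<nu> \<in> Hprod r e"
  shows "\<nu> ^ n \<in> Hprod r e"
proof -
  have "(\<nu> k ^ n) ^ e k = (\<nu> k ^ e k) ^ n" for k by (simp only: power_mult[symmetric] mult.commute)
  thus ?thesis using assms by (simp add: Hprod_def)
qed

lemma mult_in_Hprod: "\<nu> \<in> Hprod r e \<Longrightarrow> \<eta> \<in> Hprod r e \<Longrightarrow> \<nu> * \<eta> \<in> Hprod r e"
  by (simp add: Hprod_def power_mult_distrib)

context group_algebra
begin

lemma Hprod_nonzero:
  assumes "\<nu> \<in> Hprod r e"
  shows "\<nu> k \<noteq> 0"
proof (cases "k < r")
  case True
  hence "\<nu> k ^ e k = 1" "e k \<noteq> 0" using assms e_pos by (auto simp: Hprod_def)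
  thus ?thesis by (auto simp: power_0_left)
qed (use assms in \<open>simp add: Hprod_def\<close>)

lemma finite_Hprod: "finite (Hprod r e :: (nat \<Rightarrow> 'k::field) set)"
  unfolding Hprod_eq by (rule card_funs_lessThan_const(2)) (use finite_roots_of_unity e_pos in auto)

lemma card_Hprod:
  assumes "\<forall>k<r. \<not> CHAR('k) dvd e k"
  shows "card (Hprod r e :: (nat \<Rightarrow> 'k::alg_closed_field) set) = (\<Prod>k<r. e k)"
proof -
  have "card (Hprod r e :: (nat \<Rightarrow> 'k) set) = (\<Prod>k<r. card {z::'k. z ^ e k = 1})"
    unfolding Hprod_eq by (rule card_funs_lessThan_const(1)) (use finite_roots_of_unity e_pos in auto)
  also have "\<dots> = (\<Prod>k<r. e k)"
    using card_roots_of_unity e_pos assms by (intro prod.cong) auto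
  finally show ?thesis .
qed

definition character :: "(nat \<Rightarrow> 'k::field) \<Rightarrow> (nat \<Rightarrow> nat) \<Rightarrow> 'k" where
  "character \<nu> g = (\<Prod>k<r. \<nu> k ^ g k)"

definition fourier :: "((nat \<Rightarrow> nat) \<Rightarrow> 'k::field) \<Rightarrow> (nat \<Rightarrow> 'k) \<Rightarrow> 'k" where
  "fourier c \<nu> = (\<Sum>g\<in>G. c g * character \<nu> g)"

lemma character_0 [simp]: "character \<nu> 0 = 1"
  by (simp add: character_def)

lemma character_exp_add:
  "\<nu> \<in> Hprod r e \<Longrightarrow> character \<nu> (exp_add i j) = character \<nu> i * character \<nu> j"
  by (simp add: character_def exp_add_def Hprod_def power_mod_eq_if_power_eq_1 power_add prod.distrib)

lemma character_exp_neg: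
  assumes "\<nu> \<in> Hprod r e" "h \<in> G"
  shows "character \<nu> (exp_neg h) = character (inv_tuple \<nu>) h"
  unfolding character_def
proof (rule prod.cong[OF refl])
  fix k assume "k \<in> {..<r}"
  hence "\<nu> k ^ e k = 1" "h k < e k" using assms by (auto simp: Hprod_def exps_def)
  hence "\<nu> k ^ (e k - h k) * \<nu> k ^ h k = 1" by (simp flip: power_add)
  hence "\<nu> k ^ (e k - h k) = inverse (\<nu> k) ^ h k"
    using Hprod_nonzero[OF assms(1)] by (simp add: power_inverse field_simps)
  thus "\<nu> k ^ exp_neg h k = inv_tuple \<nu> k ^ h k"
    using \<open>k \<in> {..<r}\<close> \<open>\<nu> k ^ e k = 1\<close>
    by (simp add: exp_neg_def inv_tuple_def power_mod_eq_if_power_eq_1)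
qed

lemma character_mult: "character \<nu> g * character \<eta> g = character (\<nu> * \<eta>) g"
  by (simp add: character_def prod.distrib power_mult_distrib)

lemma character_power: "character \<nu> g ^ n = character (\<nu> ^ n) g"
  unfolding character_def prod_power_distrib
  by (intro prod.cong refl) (simp only: power_fun_apply power_mult[symmetric] mult.commute)

lemma fourier_diff: "fourier (x - y) \<nu> = fourier x \<nu> - fourier y \<nu>"
  by (simp add: fourier_def left_diff_distrib sum_subtractf)

lemma fourier_0 [simp]: "fourier 0 \<nu> = 0"
  by (simp add: fourier_def)

lemma fourier_mulA:
  assumes "\<nu> \<in> Hprod r e"
  shows "fourier (x \<odot> y) \<nu> = fourier x \<nu> * fourier y \<nu>"
proof -
  have shift: "(\<Sum>m\<in>G. y (exp_diff m i) * character \<nu> m) = character \<nu> i * fourier y \<nu>"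
    if "i \<in> G" for i
    using sum_exps_reindex_add[OF that, of "\<lambda>m. y (exp_diff m i) * character \<nu> m"] that assms
    by (simp add: fourier_def exp_add_commute[of _ i] character_exp_add sum_distrib_left ac_simps
        cong: sum.cong)
  have "fourier (x \<odot> y) \<nu> = (\<Sum>i\<in>G. x i * (\<Sum>m\<in>G. y (exp_diff m i) * character \<nu> m))"
    by (simp add: fourier_def mulA_eq sum_distrib_left sum_distrib_right mult.assoc)
       (rule sum.swap)
  also have "\<dots> = (\<Sum>i\<in>G. x i * (character \<nu> i * fourier y \<nu>))"
    using shift by (simp cong: sum.cong)
  also have "\<dots> = fourier x \<nu> * fourier y \<nu>"
    by (simp add: fourier_def sum_distrib_right ac_simps)
  finally show ?thesis .
qed

lemma fourier_invol:
  assumes "\<nu> \<in> Hprod r e"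
  shows "fourier (invol x) \<nu> = fourier x (inv_tuple \<nu>)"
  using sum_exps_reindex_neg[of "\<lambda>g. x (exp_neg g) * character \<nu> g"] assms
  by (simp add: fourier_def invol_def character_exp_neg cong: sum.cong)

lemma sum_character_exps:
  assumes "\<eta> \<in> Hprod r e"
  shows "(\<Sum>g\<in>G. character \<eta> g) = (if \<forall>k<r. \<eta> k = 1 then of_nat (card G) else 0)"
proof (cases "\<forall>k<r. \<eta> k = 1")
  case False
  then obtain k where k: "k < r" "\<eta> k \<noteq> 1" by blast
  have "e k \<noteq> 1" using assms k by (auto simp: Hprod_def)
  hence "1 < e k" using e_pos k by (metis less_one nat_neq_iff)
  define u where "u = (\<lambda>j. if j = k then 1 else 0 :: nat)"
  have "u \<in> G" using \<open>1 < e k\<close> k e_pos by (auto simp: exps_def u_def)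
  have "character \<eta> u = \<eta> k"
    using k by (simp add: character_def u_def power_0 if_distrib[of "(^) _"] prod.If_cases)
  have "(\<Sum>g\<in>G. character \<eta> g) = (\<Sum>g\<in>G. character \<eta> (exp_add g u))"
    using sum_exps_reindex_add[OF \<open>u \<in> G\<close>, of "character \<eta>"] by simp
  also have "\<dots> = (\<Sum>g\<in>G. character \<eta> g) * \<eta> k"
    using assms \<open>character \<eta> u = \<eta> k\<close> by (simp add: character_exp_add sum_distrib_right)
  finally have "(\<Sum>g\<in>G. character \<eta> g) = 0" using k by (simp add: algebra_simps)
  thus ?thesis by (subst if_not_P[OF False])
qed (simp add: character_def)

lemma sum_character_Hprod:
  assumes "\<forall>k<r. \<not> CHAR('k) dvd e k" "d \<in> G" "d \<noteq> 0"
  shows "(\<Sum>\<nu>\<in>Hprod r e. character \<nu> d) = (0 :: 'k::alg_closed_field)"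
proof -
  obtain k where "d k \<noteq> 0" using assms(3) by (auto simp: fun_eq_iff)
  moreover have "k < r"
    using \<open>d k \<noteq> 0\<close> assms(2) by (cases "k < r") (auto simp: exps_def)
  ultimately have k: "k < r" "0 < d k" "d k < e k" using assms(2) by (auto simp: exps_def)
  have "\<not> {z::'k. z ^ e k = 1} \<subseteq> {z. z ^ d k = 1}"
  proof
    assume "{z::'k. z ^ e k = 1} \<subseteq> {z. z ^ d k = 1}"
    hence "card {z::'k. z ^ e k = 1} \<le> card {z::'k. z ^ d k = 1}"
      using finite_roots_of_unity[OF \<open>0 < d k\<close>] by (rule card_mono[rotated])
    also have "\<dots> \<le> d k" using card_roots_of_unity_le[OF \<open>0 < d k\<close>] .
    finally show False using card_roots_of_unity[of "e k", where 'a='k] assms(1) k by simp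
  qed
  then obtain \<zeta> :: 'k where \<zeta>: "\<zeta> ^ e k = 1" "\<zeta> ^ d k \<noteq> 1" by blast
  hence "\<zeta> \<noteq> 0" using e_pos k by (auto simp: power_0_left)
  text \<open>Multiplying the \<open>k\<close>-th coordinate by \<open>\<zeta>\<close> permutes \<open>Hprod r e\<close> and scales each summand
    by \<open>\<zeta> ^ d k \<noteq> 1\<close>.\<close>
  define T where "T = (\<lambda>\<nu> :: nat \<Rightarrow> 'k. \<nu>(k := \<zeta> * \<nu> k))"
  define T' where "T' = (\<lambda>\<nu> :: nat \<Rightarrow> 'k. \<nu>(k := inverse \<zeta> * \<nu> k))"
  have character_T: "character (T \<nu>) d = \<zeta> ^ d k * character \<nu> d" for \<nu>
  proof -
    have "character (T \<nu>) d = (\<Prod>j<r. (if j = k then \<zeta> ^ d k else 1) * \<nu> j ^ d j)"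
      unfolding character_def T_def by (rule prod.cong) (auto simp: power_mult_distrib)
    thus ?thesis using k by (simp add: prod.distrib character_def)
  qed
  have "T \<nu> \<in> Hprod r e" if "\<nu> \<in> Hprod r e" for \<nu>
    using that \<zeta> k by (auto simp: T_def Hprod_def power_mult_distrib)
  moreover have "T' \<nu> \<in> Hprod r e" if "\<nu> \<in> Hprod r e" for \<nu>
    using that \<zeta> k by (auto simp: T'_def Hprod_def power_mult_distrib power_inverse)
  ultimately have "(\<Sum>\<nu>\<in>Hprod r e. character \<nu> d) = (\<Sum>\<nu>\<in>Hprod r e. character (T \<nu>) d)"
    using \<open>\<zeta> \<noteq> 0\<close>
    by (intro sum.reindex_bij_witness[of _ T T']) (auto simp: T_def T'_def mult.assoc[symmetric])
  also have "\<dots> = \<zeta> ^ d k * (\<Sum>\<nu>\<in>Hprod r e. character \<nu> d)"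
    by (simp add: character_T sum_distrib_left)
  finally have "(\<zeta> ^ d k - 1) * (\<Sum>\<nu>\<in>Hprod r e. character \<nu> d) = 0"
    by (simp add: algebra_simps)
  thus ?thesis using \<zeta> by simp
qed

text \<open>Fourier inversion: the transform is injective because \<open>card (Hprod r e) = card G\<close> is
  invertible in \<open>'k\<close>.\<close>

lemma coeff_eq_0_if_fourier_eq_0:
  fixes c :: "(nat \<Rightarrow> nat) \<Rightarrow> 'k::alg_closed_field"
  assumes "\<forall>k<r. \<not> CHAR('k) dvd e k" "\<forall>\<nu>\<in>Hprod r e. fourier c \<nu> = 0" "h \<in> G"
  shows "c h = 0"
proof -
  have "0 = (\<Sum>\<nu>\<in>Hprod r e. fourier c \<nu> * character (inv_tuple \<nu>) h)"
    using assms(2) by simp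
  also have "\<dots> = (\<Sum>g\<in>G. c g * (\<Sum>\<nu>\<in>Hprod r e. character \<nu> (exp_diff g h)))"
    using assms(3)
    by (simp add: fourier_def sum_distrib_left sum_distrib_right exp_diff_def character_exp_add
        character_exp_neg mult.assoc cong: sum.cong) (rule sum.swap)
  also have "\<dots> = (\<Sum>g\<in>G. if g = h then c h * of_nat (card (Hprod r e :: (nat \<Rightarrow> 'k) set)) else 0)"
  proof (intro sum.cong refl)
    fix g assume "g \<in> G"
    hence "exp_diff g h = 0 \<longleftrightarrow> g = h" using assms(3) by (rule exp_diff_eq_0_iff)
    thus "c g * (\<Sum>\<nu>\<in>Hprod r e. character \<nu> (exp_diff g h))
        = (if g = h then c h * of_nat (card (Hprod r e :: (nat \<Rightarrow> 'k) set)) else 0)"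
      using sum_character_Hprod[OF assms(1), of "exp_diff g h"] by auto
  qed
  also have "\<dots> = c h * of_nat (\<Prod>k<r. e k)"
    using assms by (simp add: finite_exps card_Hprod)
  finally show ?thesis
    using assms(1) e_pos by (simp add: of_nat_prod of_nat_eq_0_iff_char_dvd)
qed

lemma fourier_inject:
  fixes c d :: "(nat \<Rightarrow> nat) \<Rightarrow> 'k::alg_closed_field"
  assumes "\<forall>k<r. \<not> CHAR('k) dvd e k" "c \<in> elemsA r e" "d \<in> elemsA r e"
    and "\<forall>\<nu>\<in>Hprod r e. fourier c \<nu> = fourier d \<nu>"
  shows "c = d"
proof
  fix g show "c g = d g"
  proof (cases "g \<in> G")
    case True
    thus ?thesis using coeff_eq_0_if_fourier_eq_0[OF assms(1), of "c - d" g] assms(4)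
      by (simp add: fourier_diff)
  qed (use assms(2,3) in \<open>simp add: elemsA_iff\<close>)
qed

end


section \<open>Finite chain rings and their residue field\<close>

lemma mem_principal_ideal_iff: "x \<in> principal_ideal b \<longleftrightarrow> (\<exists>y. x = y * b)"
  by (simp add: principal_ideal_def)

lemma principal_ideal_0 [simp]: "0 \<in> principal_ideal b"
  by (auto simp: mem_principal_ideal_iff intro: exI[of _ 0])

lemma principal_ideal_1 [simp]: "x \<in> principal_ideal 1"
  by (simp add: mem_principal_ideal_iff)

lemma principal_ideal_generator: "b \<in> principal_ideal b"
  by (auto simp: mem_principal_ideal_iff intro: exI[of _ 1])

lemma principal_ideal_add: "x \<in> principal_ideal b \<Longrightarrow> y \<in> principal_ideal b \<Longrightarrow> x + y \<in> principal_ideal b"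
  by (auto simp: mem_principal_ideal_iff distrib_right intro: exI[of _ "_ + _"])

lemma principal_ideal_diff: "x \<in> principal_ideal b \<Longrightarrow> y \<in> principal_ideal b \<Longrightarrow> x - y \<in> principal_ideal b"
  by (auto simp: mem_principal_ideal_iff left_diff_distrib intro: exI[of _ "_ - _"])

lemma principal_ideal_mult_left: "x \<in> principal_ideal b \<Longrightarrow> c * x \<in> principal_ideal b"
  by (auto simp: mem_principal_ideal_iff mult.assoc intro: exI[of _ "_ * _"])

lemma principal_ideal_mult_right: "x \<in> principal_ideal b \<Longrightarrow> x * c \<in> principal_ideal b"
  by (simp add: mult.commute[of x] principal_ideal_mult_left)

lemma principal_ideal_sum: "(\<And>i. i \<in> A \<Longrightarrow> f i \<in> principal_ideal b) \<Longrightarrow> sum f A \<in> principal_ideal b"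
  by (induction A rule: infinite_finite_induct) (auto intro: principal_ideal_add)

lemma principal_ideal_mult:
  "x \<in> principal_ideal b \<Longrightarrow> y \<in> principal_ideal c \<Longrightarrow> x * y \<in> principal_ideal (b * c)"
  unfolding mem_principal_ideal_iff by (metis mult.assoc mult.left_commute)

lemma principal_ideal_power_antimono:
  assumes "i \<le> j" "x \<in> principal_ideal (b ^ j)"
  shows "x \<in> principal_ideal (b ^ i)"
proof -
  obtain y where "x = y * b ^ j" using assms(2) by (auto simp: mem_principal_ideal_iff)
  hence "x = (y * b ^ (j - i)) * b ^ i" using assms(1) by (simp add: mult.assoc flip: power_add)
  thus ?thesis by (auto simp: mem_principal_ideal_iff)
qed

lemma is_ideal_principal_ideal: "is_ideal (principal_ideal b)"
  by (auto simp: is_ideal_def intro: principal_ideal_add principal_ideal_mult_left)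

lemma coset_principal_ideal_eq_iff:
  "(+) x ` principal_ideal b = (+) y ` principal_ideal b \<longleftrightarrow> x - y \<in> principal_ideal b"
proof
  assume "(+) x ` principal_ideal b = (+) y ` principal_ideal b"
  hence "x \<in> (+) y ` principal_ideal b" by (metis image_eqI add_0_right principal_ideal_0)
  thus "x - y \<in> principal_ideal b" by auto
next
  have shift: "(+) x ` principal_ideal b \<subseteq> (+) y ` principal_ideal b"
    if "x - y \<in> principal_ideal b" for x y
  proof
    fix u assume "u \<in> (+) x ` principal_ideal b"
    then obtain z where "z \<in> principal_ideal b" "u = y + ((x - y) + z)" by auto
    thus "u \<in> (+) y ` principal_ideal b" using principal_ideal_add[OF that] by blast
  qed
  assume "x - y \<in> principal_ideal b"
  moreover have "y - x \<in> principal_ideal b"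
    using principal_ideal_diff[OF principal_ideal_0 \<open>x - y \<in> principal_ideal b\<close>] by simp
  ultimately show "(+) x ` principal_ideal b = (+) y ` principal_ideal b"
    using shift by blast
qed

lemma elemsA_factor:
  assumes "x \<in> elemsA r e" "\<forall>g. x g \<in> principal_ideal b"
  shows "\<exists>y\<in>elemsA r e. x = (\<lambda>i. b * y i)"
proof
  define y where "y = (\<lambda>g. if g \<in> exps r e then (SOME z. x g = z * b) else 0)"
  show "y \<in> elemsA r e" by (simp add: y_def elemsA_iff)
  have "x g = b * y g" for g
  proof (cases "g \<in> exps r e")
    case True
    have "\<exists>z. x g = z * b" using assms(2) by (simp add: mem_principal_ideal_iff)
    hence "x g = (SOME z. x g = z * b) * b" by (rule someI_ex)
    thus ?thesis using True by (simp add: y_def mult.commute)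
  qed (use assms(1) in \<open>simp add: y_def elemsA_iff\<close>)
  thus "x = (\<lambda>i. b * y i)" by blast
qed

lemma trivial_code_iff:
  "x \<in> trivial_code r e b t \<longleftrightarrow> x \<in> elemsA r e \<and> (\<forall>g. x g \<in> principal_ideal (b ^ (t div 2)))"
proof
  assume "x \<in> trivial_code r e b t"
  then obtain y where "y \<in> elemsA r e" "x = (\<lambda>i. b ^ (t div 2) * y i)"
    by (auto simp: trivial_code_def)
  thus "x \<in> elemsA r e \<and> (\<forall>g. x g \<in> principal_ideal (b ^ (t div 2)))"
    by (auto simp: elemsA_iff mem_principal_ideal_iff mult.commute)
next
  assume "x \<in> elemsA r e \<and> (\<forall>g. x g \<in> principal_ideal (b ^ (t div 2)))"
  thus "x \<in> trivial_code r e b t"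
    using elemsA_factor[of x r e "b ^ (t div 2)"] by (auto simp: trivial_code_def)
qed

context group_algebra
begin

lemma mulA_principal_ideal:
  "(\<And>g. x g \<in> principal_ideal b) \<Longrightarrow> (\<And>g. y g \<in> principal_ideal c) \<Longrightarrow> (x \<odot> y) m \<in> principal_ideal (b * c)"
  by (auto simp: mulA_eq intro!: principal_ideal_sum principal_ideal_mult)

lemma mulA_principal_ideal_right:
  "(\<And>g. y g \<in> principal_ideal c) \<Longrightarrow> (x \<odot> y) m \<in> principal_ideal c"
  by (auto simp: mulA_eq intro!: principal_ideal_sum principal_ideal_mult_left)

lemma invol_principal_ideal: "(\<And>g. x g \<in> principal_ideal b) \<Longrightarrow> invol x m \<in> principal_ideal b"
  by (simp add: invol_def)

end

locale chain_ring =
  fixes a :: "'r::comm_ring_1" and t :: nat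
  assumes chain: "finite_chain_ring TYPE('r)"
    and maximal: "is_maximal_ideal (principal_ideal a)"
    and nilpotency: "nilpotency_index a t"
begin

lemma finite_ring: "finite (UNIV :: 'r set)"
  using chain by (simp add: finite_chain_ring_def)

lemma one_not_in_ideal: "(1::'r) \<notin> principal_ideal a"
  using maximal principal_ideal_mult_left[of 1 a] by (auto simp: is_maximal_ideal_def)

lemma unit_if_not_in_ideal:
  assumes "v \<notin> principal_ideal a"
  shows "\<exists>w. v * w = 1"
proof -
  text \<open>The ideals are totally ordered, so \<open>(v)\<close> contains the maximal ideal \<open>(a)\<close> properly.\<close>
  have "principal_ideal a \<subseteq> principal_ideal v"
    using chain is_ideal_principal_ideal assms principal_ideal_generator[of v]
    unfolding finite_chain_ring_def by blast
  hence "principal_ideal v = UNIV"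
    using maximal is_ideal_principal_ideal assms principal_ideal_generator[of v]
    by (auto simp: is_maximal_ideal_def)
  thus ?thesis by (metis UNIV_I mem_principal_ideal_iff mult.commute)
qed

lemma power_t_eq_0: "a ^ t = 0"
  using nilpotency by (simp add: nilpotency_index_def)

lemma t_pos: "0 < t"
proof (rule ccontr)
  assume "\<not> 0 < t"
  hence "(1::'r) = 0" using power_t_eq_0 by simp
  thus False using one_not_in_ideal by simp
qed

lemma principal_ideal_power_ge_t: "t \<le> j \<Longrightarrow> x \<in> principal_ideal (a ^ j) \<Longrightarrow> x = 0"
  using principal_ideal_power_antimono[of t j x a] by (auto simp: mem_principal_ideal_iff power_t_eq_0)

lemma not_in_ideal_if_not_in_power_Suc:
  "x = w * a ^ k \<Longrightarrow> x \<notin> principal_ideal (a ^ Suc k) \<Longrightarrow> w \<notin> principal_ideal a"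
  by (auto simp: mem_principal_ideal_iff ac_simps)

lemma annihilator_power:
  assumes "j \<le> t" "a ^ j * y = 0"
  shows "y \<in> principal_ideal (a ^ (t - j))"
proof (rule ccontr)
  assume "y \<notin> principal_ideal (a ^ (t - j))"
  then obtain i where i: "i < t - j" "y \<in> principal_ideal (a ^ i)" "y \<notin> principal_ideal (a ^ Suc i)"
    using ex_least_nat_less[of "\<lambda>i. y \<notin> principal_ideal (a ^ i)" "t - j"]
    by (auto simp del: power_Suc)
  then obtain v where v: "y = v * a ^ i" by (auto simp: mem_principal_ideal_iff)
  then obtain w where "v * w = 1"
    using i(3) not_in_ideal_if_not_in_power_Suc unit_if_not_in_ideal by blast
  hence "a ^ (i + j) = (v * w) * a ^ (i + j)" by simp
  also have "\<dots> = w * (a ^ j * y)" using v by (simp add: power_add ac_simps)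
  finally have "a ^ (i + j) = w * (a ^ j * y)" .
  hence "a ^ (i + j) = 0" using assms by simp
  moreover have "i + j < t" using i assms by linarith
  ultimately show False using nilpotency by (auto simp: nilpotency_index_def)
qed

end


lemma card_range_eq_if_same_fibers:
  assumes "\<And>x y. f x = f y \<longleftrightarrow> g x = g y"
  shows "card (range f) = card (range g)"
proof -
  have h: "g (inv f (f x)) = g x" for x
    using assms f_inv_into_f[of "f x" f UNIV] by blast
  hence "range g = (\<lambda>y. g (inv f y)) ` range f" by (auto simp: image_iff)
  moreover have "inj_on (\<lambda>y. g (inv f y)) (range f)"
    using h assms by (auto simp: inj_on_def)
  ultimately show ?thesis by (simp add: card_image)
qed

lemma of_nat_mod_CHAR: "(of_nat (n mod CHAR('a)) :: 'a::semiring_1) = of_nat n"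
proof -
  have "(of_nat n :: 'a) = of_nat (CHAR('a) * (n div CHAR('a)) + n mod CHAR('a))" by simp
  thus ?thesis by (simp only: of_nat_add of_nat_mult of_nat_CHAR) simp
qed

lemma of_nat_mult_mem_if_add_closed:
  "0 \<in> W \<Longrightarrow> \<forall>u\<in>W. \<forall>v\<in>W. u + v \<in> W \<Longrightarrow> w \<in> W \<Longrightarrow> of_nat n * w \<in> W"
  by (induction n) (auto simp: distrib_right)

lemma uminus_mem_if_add_closed:
  fixes W :: "'a::ring_1 set"
  assumes "0 < CHAR('a)" "0 \<in> W" "\<forall>u\<in>W. \<forall>v\<in>W. u + v \<in> W" "w \<in> W"
  shows "- w \<in> W"
proof -
  have "of_nat (CHAR('a) - 1) * w + w = 0"
    using assms(1) by (simp add: of_nat_diff algebra_simps)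
  hence "- w = of_nat (CHAR('a) - 1) * w" by (simp add: neg_eq_iff_add_eq_0 add.commute)
  thus ?thesis using of_nat_mult_mem_if_add_closed assms(2-4) by metis
qed

text \<open>Multiplication by \<open>i\<close> is invertible modulo the prime \<open>p\<close>, and \<open>W\<close> is closed under
  multiplication by natural numbers.\<close>

lemma of_nat_mult_not_mem_if_add_closed:
  fixes W :: "'a::field set"
  assumes p: "prime CHAR('a)" and W: "0 \<in> W" "\<forall>u\<in>W. \<forall>v\<in>W. u + v \<in> W"
    and "x \<notin> W" "0 < i" "i < CHAR('a)"
  shows "of_nat i * x \<notin> W"
proof
  assume "of_nat i * x \<in> W"
  have "coprime i (CHAR('a))"
    using assms(5,6) p by (metis coprime_commute dvd_imp_le prime_imp_coprime_nat not_le)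
  then obtain u k where "i * u = CHAR('a) * k + 1"
    using bezout_nat[of i "CHAR('a)"] assms(5) by auto
  hence "x = of_nat u * (of_nat i * x)" by (metis (no_types) of_nat_1 of_nat_CHAR of_nat_add
      of_nat_mult mult_zero_left add_0 mult_1 mult.assoc mult.commute)
  moreover have "of_nat u * (of_nat i * x) \<in> W"
    by (rule of_nat_mult_mem_if_add_closed[OF W \<open>of_nat i * x \<in> W\<close>])
  ultimately show False using \<open>x \<notin> W\<close> by metis
qed

text \<open>The translates of \<open>W\<close> by the \<open>p\<close> multiples \<open>i x\<close>, \<open>i < p\<close>, are pairwise disjoint.\<close>

lemma additive_closed_extend:
  fixes W :: "'a::field set"
  assumes p: "prime CHAR('a)" and W: "finite W" "0 \<in> W" "\<forall>u\<in>W. \<forall>v\<in>W. u + v \<in> W"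
    and x: "x \<notin> W"
  defines "W' \<equiv> (\<lambda>(w, i). w + of_nat i * x) ` (W \<times> {..<CHAR('a)})"
  shows "card W' = CHAR('a) * card W" "0 \<in> W'" "\<forall>u\<in>W'. \<forall>v\<in>W'. u + v \<in> W'"
proof -
  let ?p = "CHAR('a)"
  have same_index: "i = i'"
    if "w \<in> W" "w' \<in> W" "i < ?p" "i' \<le> i" "w + of_nat i * x = w' + of_nat i' * x" for w w' i i'
  proof (rule ccontr)
    assume "i \<noteq> i'"
    have "of_nat (i - i') * x = w' + - w" using that by (simp add: of_nat_diff algebra_simps)
    moreover have "w' + - w \<in> W"
      using W(3) uminus_mem_if_add_closed[OF prime_gt_0_nat[OF p] W(2,3)] that(1,2) by blast
    ultimately have "of_nat (i - i') * x \<in> W" by metis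
    moreover have "0 < i - i'" "i - i' < ?p" using \<open>i \<noteq> i'\<close> that(3,4) by auto
    ultimately show False using of_nat_mult_not_mem_if_add_closed[OF p W(2,3) x] by blast
  qed
  have "inj_on (\<lambda>(w, i). w + of_nat i * x) (W \<times> {..<?p})"
  proof (rule inj_onI, clarify)
    fix w i w' i' assume "w \<in> W" "w' \<in> W" "i < ?p" "i' < ?p"
      and eq: "w + of_nat i * x = w' + of_nat i' * x"
    have "i = i'"
      using same_index[of w w' i i'] same_index[of w' w i' i] eq \<open>w \<in> W\<close> \<open>w' \<in> W\<close> \<open>i < ?p\<close> \<open>i' < ?p\<close>
      by (cases "i' \<le> i") auto
    thus "w = w' \<and> i = i'" using eq by simp
  qed
  thus "card W' = ?p * card W"
    using W(1) by (simp add: W'_def card_image card_cartesian_product)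
  show "0 \<in> W'" using W(2) prime_gt_0_nat[OF p] by (force simp: W'_def)
  show "\<forall>u\<in>W'. \<forall>v\<in>W'. u + v \<in> W'"
  proof (clarsimp simp: W'_def)
    fix w i w' i' assume "w \<in> W" "w' \<in> W" "i < ?p" "i' < ?p"
    have "w + of_nat i * x + (w' + of_nat i' * x) = (w + w') + of_nat ((i + i') mod ?p) * x"
      by (simp add: of_nat_mod_CHAR algebra_simps)
    moreover have "(i + i') mod ?p < ?p" using prime_gt_0_nat[OF p] by simp
    ultimately show "w + of_nat i * x + (w' + of_nat i' * x)
        \<in> (\<lambda>(w, i). w + of_nat i * x) ` (W \<times> {..<?p})"
      using W(3) \<open>w \<in> W\<close> \<open>w' \<in> W\<close> by force
  qed
qed

lemma card_additive_closed_prime_power: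
  fixes V :: "'a::field set"
  assumes p: "prime CHAR('a)" and V: "finite V" "0 \<in> V" "\<forall>u\<in>V. \<forall>v\<in>V. u + v \<in> V"
  shows "\<exists>m. card V = CHAR('a) ^ m"
proof -
  let ?closed = "\<lambda>W. W \<subseteq> V \<and> 0 \<in> W \<and> (\<forall>u\<in>W. \<forall>v\<in>W. u + v \<in> W)"
  have "\<exists>m. card V = CHAR('a) ^ m"
    if "?closed W" "card W = CHAR('a) ^ j" "card V - card W = n" for W j n
    using that
  proof (induction n arbitrary: W j rule: less_induct)
    case (less n)
    show ?case
    proof (cases "W = V")
      case False
      then obtain x where x: "x \<in> V" "x \<notin> W" using less.prems(1) by blast
      define W' where "W' = (\<lambda>(w, i). w + of_nat i * x) ` (W \<times> {..<CHAR('a)})"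
      have W: "W \<subseteq> V" "0 \<in> W" "\<forall>u\<in>W. \<forall>v\<in>W. u + v \<in> W" using less.prems(1) by blast+
      have fin: "finite W" using W(1) V(1) finite_subset by blast
      note ext = additive_closed_extend[OF p fin W(2,3) x(2), folded W'_def]
      have "W' \<subseteq> V"
      proof (clarsimp simp: W'_def)
        fix w i assume "w \<in> W"
        thus "w + of_nat i * x \<in> V"
          using W(1) V(3) of_nat_mult_mem_if_add_closed[OF V(2,3) x(1)] by blast
      qed
      hence "card W' \<le> card V" using V(1) card_mono by blast
      moreover have "card W < card W'"
        using ext(1) mult_less_mono1[of 1 "CHAR('a)" "card W"] prime_gt_1_nat[OF p] fin W(2)
        by (auto simp: card_gt_0_iff)
      ultimately have "card V - card W' < n" using less.prems(3) by linarith
      moreover have "card W' = CHAR('a) ^ Suc j" using ext(1) less.prems by simp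
      ultimately show ?thesis using less.IH ext(2,3) \<open>W' \<subseteq> V\<close> by blast
    qed (use less.prems in blast)
  qed
  from this[of "{0}" 0] show ?thesis using V(2) by simp
qed

locale residue_closure = chain_ring a t for a :: "'r::comm_ring_1" and t +
  fixes \<phi> :: "'r \<Rightarrow> 'k::alg_closed_field" and p q :: nat
  assumes q_def: "q = residue_card a"
    and prime_p: "prime p" and p_in_ideal: "of_nat p \<in> principal_ideal a"
    and closure: "alg_closure_of_residue \<phi> a"
begin

lemma phi_add: "\<phi> (x + y) = \<phi> x + \<phi> y"
  using closure by (simp add: alg_closure_of_residue_def)

lemma phi_mult: "\<phi> (x * y) = \<phi> x * \<phi> y"
  using closure by (simp add: alg_closure_of_residue_def)

lemma phi_1 [simp]: "\<phi> 1 = 1"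
  using closure by (simp add: alg_closure_of_residue_def)

lemma phi_eq_0_iff: "\<phi> x = 0 \<longleftrightarrow> x \<in> principal_ideal a"
  using closure by (auto simp: alg_closure_of_residue_def set_eq_iff)

lemma phi_0 [simp]: "\<phi> 0 = 0"
  by (simp add: phi_eq_0_iff)

lemma phi_diff: "\<phi> (x - y) = \<phi> x - \<phi> y"
  using phi_add[of "x - y" y] by (simp add: algebra_simps)

lemma phi_sum: "\<phi> (sum f A) = (\<Sum>i\<in>A. \<phi> (f i))"
  by (induction A rule: infinite_finite_induct) (auto simp: phi_add)

lemma phi_of_nat: "\<phi> (of_nat n) = of_nat n"
  by (induction n) (auto simp: phi_add)

lemma CHAR_eq: "CHAR('k) = p"
proof -
  have "(of_nat p :: 'k) = 0" using p_in_ideal phi_of_nat[of p] phi_eq_0_iff by metis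
  hence "CHAR('k) dvd p" by (simp add: of_nat_eq_0_iff_char_dvd)
  thus ?thesis using prime_p CHAR_not_1 unfolding prime_nat_iff by auto
qed

lemma prime_CHAR: "prime CHAR('k)"
  using prime_p by (simp add: CHAR_eq)

abbreviation Fq :: "'k set" where "Fq \<equiv> range \<phi>"

lemma Fq_add: "x \<in> Fq \<Longrightarrow> y \<in> Fq \<Longrightarrow> x + y \<in> Fq"
  by (auto simp: phi_add[symmetric])

lemma Fq_mult: "x \<in> Fq \<Longrightarrow> y \<in> Fq \<Longrightarrow> x * y \<in> Fq"
  by (auto simp: phi_mult[symmetric])

lemma Fq_of_nat: "of_nat n \<in> Fq"
  by (metis phi_of_nat rangeI)

lemma Fq_inverse: "x \<in> Fq \<Longrightarrow> inverse x \<in> Fq"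
proof (cases "x = 0")
  case False
  assume "x \<in> Fq"
  then obtain y where "x = \<phi> y" by blast
  then obtain w where "y * w = 1" using False unit_if_not_in_ideal phi_eq_0_iff by blast
  hence "inverse x = \<phi> w" using \<open>x = \<phi> y\<close> by (metis phi_1 phi_mult inverse_unique)
  thus ?thesis by simp
qed (metis inverse_zero phi_0 rangeI)

lemma finite_Fq: "finite Fq"
  using finite_ring by simp

lemma card_Fq: "card Fq = q"
proof -
  have "\<phi> x = \<phi> y \<longleftrightarrow> (+) x ` principal_ideal a = (+) y ` principal_ideal a" for x y
    by (simp only: coset_principal_ideal_eq_iff phi_eq_0_iff[symmetric] phi_diff) simp
  hence "card Fq = card (range (\<lambda>x. (+) x ` principal_ideal a))"
    by (rule card_range_eq_if_same_fibers)
  thus ?thesis by (simp add: q_def residue_card_def)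
qed

lemma q_ge_2: "q \<ge> 2"
proof -
  have "card {\<phi> 0, \<phi> 1} \<le> card Fq" by (rule card_mono[OF finite_Fq]) blast
  thus ?thesis using card_Fq by simp
qed

lemma Fq_power_q: "x \<in> Fq \<Longrightarrow> x ^ q = x"
proof (cases "x = 0")
  case False
  assume "x \<in> Fq"
  let ?U = "Fq - {0}"
  have "(\<Prod>y\<in>?U. x * y) = (\<Prod>y\<in>?U. y)"
    by (rule prod.reindex_bij_witness[of _ "\<lambda>y. inverse x * y" "\<lambda>y. x * y"])
       (use False \<open>x \<in> Fq\<close> in \<open>auto simp: Fq_mult Fq_inverse\<close>)
  hence "x ^ card ?U * (\<Prod>y\<in>?U. y) = (\<Prod>y\<in>?U. y)" by (simp add: prod.distrib)
  moreover have "(\<Prod>y\<in>?U. y) \<noteq> 0" using finite_Fq by simp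
  moreover have "card ?U = q - 1"
    using card_Fq finite_Fq rangeI[of \<phi> 0] by (simp add: card_Diff_singleton)
  ultimately have "x ^ (q - 1) = 1" by simp
  moreover have "x ^ q = x * x ^ (q - 1)" using q_ge_2 by (cases q) auto
  ultimately show ?thesis by simp
qed (use q_ge_2 in \<open>simp add: power_0_left\<close>)

lemma mem_Fq_if_power_q: "(x::'k) ^ q = x \<Longrightarrow> x \<in> Fq"
proof -
  assume "x ^ q = x"
  define P :: "'k poly" where "P = monom 1 q + - [:0, 1:]"
  have roots: "{z. poly P z = 0} = {z. z ^ q = z}" by (simp add: P_def poly_monom)
  have "degree P = q" unfolding P_def using q_ge_2
    by (subst degree_add_eq_left) (auto simp: degree_monom_eq)
  hence "P \<noteq> 0" using q_ge_2 by auto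
  hence "finite {z. poly P z = 0}" "card {z. poly P z = 0} \<le> q"
    using poly_roots_finite[of P] card_poly_roots_bound[of P] \<open>degree P = q\<close> by simp_all
  hence "finite {z::'k. z ^ q = z}" "card {z::'k. z ^ q = z} \<le> q" unfolding roots .
  moreover have "Fq \<subseteq> {z. z ^ q = z}" using Fq_power_q by auto
  ultimately have "Fq = {z. z ^ q = z}" using card_seteq card_Fq by metis
  thus ?thesis using \<open>x ^ q = x\<close> by simp
qed

lemma q_prime_power: "\<exists>m. q = p ^ m"
  using card_additive_closed_prime_power[OF prime_CHAR finite_Fq] Fq_add card_Fq CHAR_eq
  by (metis phi_0 rangeI)

lemma power_q_power_sum: "(sum f A :: 'k) ^ q ^ s = (\<Sum>i\<in>A. f i ^ q ^ s)"
proof -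
  obtain m where "q = p ^ m" using q_prime_power by blast
  thus ?thesis using freshmans_dream_sum'[OF prime_CHAR, of "q ^ s" "m * s"]
    by (simp add: CHAR_eq power_mult)
qed

lemma power_q_power_inject: "(x::'k) ^ q ^ s = y ^ q ^ s \<Longrightarrow> x = y"
proof -
  assume "x ^ q ^ s = y ^ q ^ s"
  obtain m where "q = p ^ m" using q_prime_power by blast
  hence "(x - y) ^ q ^ s = x ^ q ^ s - y ^ q ^ s"
    using freshmans_dream'[OF prime_CHAR, of "q ^ s" "m * s" "x - y" y]
    by (simp add: CHAR_eq power_mult algebra_simps)
  thus "x = y" using \<open>x ^ q ^ s = y ^ q ^ s\<close> by simp
qed

lemma power_q_power_Fq: "x \<in> Fq \<Longrightarrow> x ^ q ^ s = x"
  by (induction s) (simp_all add: power_mult Fq_power_q)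

end


section \<open>Idempotents of the group algebra\<close>

context group_algebra
begin

text \<open>The element whose Fourier transform is the indicator function of \<open>C\<close>.\<close>

definition indicator_idempotent :: "(nat \<Rightarrow> 'k::field) set \<Rightarrow> (nat \<Rightarrow> nat) \<Rightarrow> 'k" where
  "indicator_idempotent C =
     (\<lambda>g. if g \<in> G then inverse (of_nat (card G)) * (\<Sum>\<xi>\<in>C. character (inv_tuple \<xi>) g) else 0)"

lemma indicator_idempotent_in_elemsA: "indicator_idempotent C \<in> elemsA r e"
  by (simp add: indicator_idempotent_def elemsA_iff)

lemma fourier_indicator_idempotent:
  fixes C :: "(nat \<Rightarrow> 'k::alg_closed_field) set"
  assumes "\<forall>k<r. \<not> CHAR('k) dvd e k" "C \<subseteq> Hprod r e" "\<nu> \<in> Hprod r e"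
  shows "fourier (indicator_idempotent C) \<nu> = (if \<nu> \<in> C then 1 else 0)"
proof -
  have "(of_nat (card G) :: 'k) \<noteq> 0"
    using assms(1) e_pos by (simp add: card_exps of_nat_prod of_nat_eq_0_iff_char_dvd)
  have "finite C" using assms(2) finite_Hprod finite_subset by blast
  have "(\<Sum>g\<in>G. character (inv_tuple \<xi> * \<nu>) g) = (if \<xi> = \<nu> then of_nat (card G) else 0)"
    if "\<xi> \<in> C" for \<xi>
  proof -
    have "\<xi> \<in> Hprod r e" using that assms(2) by blast
    hence "inv_tuple \<xi> k * \<nu> k = 1 \<longleftrightarrow> \<xi> k = \<nu> k" for k
      using Hprod_nonzero[of \<xi> k] by (auto simp: inv_tuple_def field_simps)
    moreover have "\<xi> k = \<nu> k" if "k \<ge> r" for k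
      using \<open>\<xi> \<in> Hprod r e\<close> assms(3) that by (simp add: Hprod_def)
    ultimately have "(\<forall>k<r. inv_tuple \<xi> k * \<nu> k = 1) \<longleftrightarrow> \<xi> = \<nu>" by (metis not_le ext)
    moreover have "inv_tuple \<xi> * \<nu> \<in> Hprod r e"
      using \<open>\<xi> \<in> Hprod r e\<close> assms(3) by (intro mult_in_Hprod inv_tuple_in_Hprod)
    ultimately show ?thesis using sum_character_exps[of "inv_tuple \<xi> * \<nu>"] by simp
  qed
  note sums = this
  have "fourier (indicator_idempotent C) \<nu>
      = (\<Sum>g\<in>G. \<Sum>\<xi>\<in>C. inverse (of_nat (card G)) * character (inv_tuple \<xi> * \<nu>) g)"
    by (simp add: fourier_def indicator_idempotent_def sum_distrib_left sum_distrib_right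
        character_mult mult.assoc)
  also have "\<dots> = (\<Sum>\<xi>\<in>C. inverse (of_nat (card G)) * (\<Sum>g\<in>G. character (inv_tuple \<xi> * \<nu>) g))"
    by (subst sum.swap) (simp add: sum_distrib_left)
  also have "\<dots> = (\<Sum>\<xi>\<in>C. inverse (of_nat (card G)) * (if \<xi> = \<nu> then of_nat (card G) else 0))"
    by (intro sum.cong refl) (simp add: sums)
  also have "\<dots> = (if \<nu> \<in> C then 1 else 0)"
    using \<open>finite C\<close> \<open>(of_nat (card G) :: 'k) \<noteq> 0\<close>
    by (simp add: if_distrib[of "(*) _"] sum.delta cong: if_cong)
  finally show ?thesis .
qed

lemma indicator_idempotent_idem:
  fixes C :: "(nat \<Rightarrow> 'k::alg_closed_field) set"
  assumes "\<forall>k<r. \<not> CHAR('k) dvd e k" "C \<subseteq> Hprod r e"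
  shows "indicator_idempotent C \<odot> indicator_idempotent C = indicator_idempotent C"
  using assms by (intro fourier_inject)
    (simp_all add: indicator_idempotent_in_elemsA fourier_mulA fourier_indicator_idempotent)

lemma indicator_idempotent_orth:
  fixes C :: "(nat \<Rightarrow> 'k::alg_closed_field) set"
  assumes "\<forall>k<r. \<not> CHAR('k) dvd e k" "C \<subseteq> Hprod r e" "\<forall>\<xi>\<in>C. inv_tuple \<xi> \<notin> C"
  shows "indicator_idempotent C \<odot> invol (indicator_idempotent C) = 0"
  using assms by (intro fourier_inject)
    (auto simp: fourier_mulA fourier_invol fourier_indicator_idempotent inv_tuple_in_Hprod)

primrec powA :: "((nat \<Rightarrow> nat) \<Rightarrow> 'a::comm_ring_1) \<Rightarrow> nat \<Rightarrow> (nat \<Rightarrow> nat) \<Rightarrow> 'a" where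
  "powA x 0 = one_A"
| "powA x (Suc n) = x \<odot> powA x n"

lemma powA_in_elemsA: "powA x n \<in> elemsA r e"
  by (cases n) simp_all

lemma powA_add: "powA x (m + n) = powA x m \<odot> powA x n"
  by (induction m) (simp_all add: powA_in_elemsA mulA_assoc)

lemma powA_idem: "y \<in> elemsA r e \<Longrightarrow> y \<odot> y = y \<Longrightarrow> powA y (Suc n) = y"
  by (induction n) simp_all

text \<open>The powers are eventually periodic; the idempotent power is the one whose exponent is a
  multiple of the period beyond the preperiod.\<close>

lemma exists_idempotent_powA:
  fixes x :: "(nat \<Rightarrow> nat) \<Rightarrow> 'a::comm_ring_1"
  assumes "finite (UNIV :: 'a set)"
  shows "\<exists>k\<ge>1. powA x k \<odot> powA x k = powA x k"
proof -
  define F where "F n = powA x (Suc n)" for n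
  have "range F \<subseteq> elemsA r e" using powA_in_elemsA by (auto simp: F_def simp del: powA.simps)
  hence "\<not> inj F" using finite_elemsA[OF assms] finite_subset finite_imageD infinite_UNIV_nat by blast
  then obtain i j where "i < j" "F i = F j"
    unfolding inj_def by (metis linorder_neqE_nat)
  define d where "d = j - i"
  define b where "b = Suc i"
  have "d \<ge> 1" using \<open>i < j\<close> by (simp add: d_def)
  have step: "powA x (b + l + d) = powA x (b + l)" for l
  proof -
    have "powA x (b + l + d) = powA x l \<odot> F j"
      using \<open>i < j\<close> powA_add[of x l "Suc j"] by (simp add: F_def b_def d_def del: powA.simps)
    also have "\<dots> = powA x (b + l)"
      using \<open>F i = F j\<close> powA_add[of x l b] by (simp add: F_def b_def add.commute del: powA.simps)
    finally show ?thesis .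
  qed
  have periodic: "powA x (b + l + d * c) = powA x (b + l)" for l c
  proof (induction c)
    case (Suc c)
    have "b + l + d * Suc c = b + (l + d * c) + d" by simp
    thus ?case using step[of "l + d * c"] Suc by (simp add: ac_simps del: powA.simps)
  qed simp
  define k where "k = b * d"
  have "k \<ge> b" using \<open>d \<ge> 1\<close> by (simp add: k_def)
  have "powA x (k + k) = powA x (b + (k - b) + d * b)"
    using \<open>k \<ge> b\<close> by (simp add: k_def mult.commute)
  also have "\<dots> = powA x k" using periodic[of "k - b" b] \<open>k \<ge> b\<close> by simp
  finally have "powA x k \<odot> powA x k = powA x k" by (simp only: powA_add)
  moreover have "k \<ge> 1" using \<open>k \<ge> b\<close> by (simp add: b_def)
  ultimately show ?thesis by blast
qed

lemma orthogonal_idempotent_complement: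
  fixes f :: "(nat \<Rightarrow> nat) \<Rightarrow> 'a::comm_ring_1"
  assumes f: "f \<in> elemsA r e" "f \<odot> f = f" "f \<odot> invol f = 0"
  defines "u \<equiv> one_A - f - invol f"
  shows "invol f \<odot> invol f = invol f" "f \<odot> u = 0" "invol f \<odot> u = 0" "u \<odot> u = u"
    and "invol u = u" "u \<in> elemsA r e" "x \<in> elemsA r e \<Longrightarrow> x = x \<odot> f + x \<odot> invol f + x \<odot> u"
proof -
  show ff: "invol f \<odot> invol f = invol f" by (simp only: f(2) flip: invol_mulA)
  have fsf: "invol f \<odot> f = 0" by (simp only: mulA_commute[of "invol f" f] f(3))
  show fu: "f \<odot> u = 0" by (simp add: u_def mulA_diff_right f)
  show fsu: "invol f \<odot> u = 0" by (simp add: u_def mulA_diff_right ff fsf)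
  show "u \<in> elemsA r e"
    using f(1) zero_in_exps by (auto simp: u_def elemsA_iff delta_def) (metis invol_in_elemsA elemsA_iff)
  have "u \<odot> u = one_A \<odot> u - f \<odot> u - invol f \<odot> u" by (simp only: u_def mulA_diff_left)
  thus "u \<odot> u = u" using \<open>u \<in> elemsA r e\<close> fu fsu by simp
  have "invol u = one_A - invol f - f" using f(1) by (simp add: u_def invol_diff)
  thus "invol u = u" by (simp add: u_def algebra_simps)
  show "x \<in> elemsA r e \<Longrightarrow> x = x \<odot> f + x \<odot> invol f + x \<odot> u"
    by (simp add: u_def mulA_diff_right)
qed

end


section \<open>Self-dual codes\<close>

locale abelian_code_setting = residue_closure a t \<phi> p q + group_algebra r e
  for a :: "'r::comm_ring_1" and t and \<phi> :: "'r \<Rightarrow> 'k::alg_closed_field" and p q r e +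
  assumes t_even: "even t" and e_coprime: "\<forall>k<r. \<not> p dvd e k"
begin

lemma CHAR_not_dvd_e: "\<forall>k<r. \<not> CHAR('k) dvd e k"
  using e_coprime by (simp add: CHAR_eq)

lemma t_div_2: "t div 2 + t div 2 = t"
  using t_even by presburger

lemma phi_mulA: "\<phi> \<circ> (x \<odot> y) = (\<phi> \<circ> x) \<odot> (\<phi> \<circ> y)"
  by (simp add: fun_eq_iff mulA_eq phi_sum phi_mult)

lemma phi_invol: "\<phi> \<circ> invol x = invol (\<phi> \<circ> x)"
  by (simp add: fun_eq_iff invol_def)

lemma phi_powA: "\<phi> \<circ> powA x n = powA (\<phi> \<circ> x) n"
proof (induction n)
  case 0 show ?case by (simp add: fun_eq_iff delta_def)
next
  case (Suc n) thus ?case by (simp only: powA.simps phi_mulA)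
qed

lemma phi_comp_in_elemsA: "x \<in> elemsA r e \<Longrightarrow> \<phi> \<circ> x \<in> elemsA r e"
  by (simp add: elemsA_iff)

lemma phi_comp_eq_0_iff: "\<phi> \<circ> x = 0 \<longleftrightarrow> (\<forall>g. x g \<in> principal_ideal a)"
  by (simp add: fun_eq_iff phi_eq_0_iff)

lemma fourier_power_q_power:
  assumes "\<forall>g\<in>G. c g \<in> Fq"
  shows "fourier c \<nu> ^ q ^ s = fourier c (\<nu> ^ q ^ s)"
  unfolding fourier_def power_q_power_sum
  using assms by (intro sum.cong refl) (simp add: power_mult_distrib character_power power_q_power_Fq)

lemma orbitC_eq: "orbitC q \<mu> = {\<mu> ^ q ^ s | s. True}"
proof -
  have "(\<lambda>k. \<mu> k ^ q ^ s) = \<mu> ^ q ^ s" for s by (simp add: fun_eq_iff)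
  thus ?thesis by (simp add: orbitC_def)
qed

lemma self_mem_orbitC: "\<mu> \<in> orbitC q \<mu>"
  unfolding orbitC_eq by (metis (mono_tags) mem_Collect_eq power_0 power_one_right)

lemma orbitC_subset_Hprod: "\<mu> \<in> Hprod r e \<Longrightarrow> orbitC q \<mu> \<subseteq> Hprod r e"
  by (auto simp: orbitC_eq power_in_Hprod)

lemma tuple_power_q_power_inject: "(\<xi> :: nat \<Rightarrow> 'k) ^ q ^ n = \<eta> ^ q ^ n \<Longrightarrow> \<xi> = \<eta>"
  by (auto simp: fun_eq_iff intro: power_q_power_inject)

lemma inv_tuple_power: "inv_tuple (\<nu> ^ n) = inv_tuple \<nu> ^ n"
  by (simp add: inv_tuple_def fun_eq_iff power_inverse)

lemma orbitC_period:
  assumes "\<mu> \<in> Hprod r e"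
  shows "\<exists>N\<ge>1. \<mu> ^ q ^ N = (\<mu> :: nat \<Rightarrow> 'k)"
proof -
  have "range (\<lambda>s. \<mu> ^ q ^ s) \<subseteq> Hprod r e" using power_in_Hprod[OF assms] by blast
  hence "\<not> inj (\<lambda>s. \<mu> ^ q ^ s)"
    using finite_Hprod finite_subset finite_imageD infinite_UNIV_nat by blast
  then obtain i j where "i < j" "\<mu> ^ q ^ i = \<mu> ^ q ^ j"
    unfolding inj_def by (metis linorder_neqE_nat)
  hence "(\<mu> ^ q ^ (j - i)) ^ q ^ i = \<mu> ^ q ^ i"
    by (simp flip: power_mult power_add)
  hence "\<mu> ^ q ^ (j - i) = \<mu>" by (rule tuple_power_q_power_inject)
  thus ?thesis using \<open>i < j\<close> by (intro exI[of _ "j - i"]) simp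
qed

lemma orbitC_trans: "\<beta> \<in> orbitC q \<alpha> \<Longrightarrow> orbitC q \<beta> \<subseteq> orbitC q \<alpha>"
  by (auto simp: orbitC_eq simp flip: power_mult power_add)

lemma orbitC_sym:
  fixes \<mu> :: "nat \<Rightarrow> 'k"
  assumes "\<mu> \<in> Hprod r e" "\<xi> \<in> orbitC q \<mu>"
  shows "\<mu> \<in> orbitC q \<xi>"
proof -
  obtain s where s: "\<xi> = \<mu> ^ q ^ s" using assms(2) by (auto simp: orbitC_eq)
  obtain N where "N \<ge> 1" "\<mu> ^ q ^ N = \<mu>" using orbitC_period[OF assms(1)] by blast
  have "\<mu> ^ q ^ (N * c) = \<mu>" for c
    by (induction c) (simp_all add: power_add power_mult \<open>\<mu> ^ q ^ N = \<mu>\<close>)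
  moreover have "N * s = s + (N - 1) * s" using \<open>N \<ge> 1\<close> by (cases N) auto
  ultimately have "\<mu> = \<mu> ^ q ^ (s + (N - 1) * s)" by metis
  also have "\<dots> = \<xi> ^ q ^ ((N - 1) * s)" by (simp add: s power_add power_mult)
  finally show ?thesis by (auto simp: orbitC_eq)
qed

lemma inv_tuple_notin_orbitC:
  fixes \<mu> :: "nat \<Rightarrow> 'k"
  assumes "\<mu> \<in> Hprod r e" "orbitC q \<mu> \<noteq> orbitC q (inv_tuple \<mu>)" "\<xi> \<in> orbitC q \<mu>"
  shows "inv_tuple \<xi> \<notin> orbitC q \<mu>"
proof
  assume "inv_tuple \<xi> \<in> orbitC q \<mu>"
  obtain j where "\<mu> = \<xi> ^ q ^ j" using orbitC_sym[OF assms(1,3)] by (auto simp: orbitC_eq)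
  hence "inv_tuple \<mu> \<in> orbitC q (inv_tuple \<xi>)" by (auto simp: orbitC_eq inv_tuple_power)
  hence "inv_tuple \<mu> \<in> orbitC q \<mu>" using orbitC_trans[OF \<open>inv_tuple \<xi> \<in> orbitC q \<mu>\<close>] by blast
  moreover from this have "\<mu> \<in> orbitC q (inv_tuple \<mu>)" using orbitC_sym[OF assms(1)] by blast
  ultimately show False using orbitC_trans assms(2) by blast
qed

lemma power_q_image_orbitC:
  fixes \<mu> :: "nat \<Rightarrow> 'k"
  assumes "\<mu> \<in> Hprod r e"
  shows "(\<lambda>\<xi>. \<xi> ^ q) ` orbitC q \<mu> = orbitC q \<mu>"
proof
  show "(\<lambda>\<xi>. \<xi> ^ q) ` orbitC q \<mu> \<subseteq> orbitC q \<mu>"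
  proof
    fix \<eta> assume "\<eta> \<in> (\<lambda>\<xi>. \<xi> ^ q) ` orbitC q \<mu>"
    then obtain s where "\<eta> = (\<mu> ^ q ^ s) ^ q" by (auto simp: orbitC_eq)
    hence "\<eta> = \<mu> ^ q ^ Suc s" by (simp only: power_Suc2 power_mult)
    thus "\<eta> \<in> orbitC q \<mu>" unfolding orbitC_eq by blast
  qed
next
  obtain N where "N \<ge> 1" "\<mu> ^ q ^ N = \<mu>" using orbitC_period[OF assms] by blast
  show "orbitC q \<mu> \<subseteq> (\<lambda>\<xi>. \<xi> ^ q) ` orbitC q \<mu>"
  proof
    fix \<eta> assume "\<eta> \<in> orbitC q \<mu>"
    then obtain s where "\<eta> = \<mu> ^ q ^ s" by (auto simp: orbitC_eq)
    also have "\<dots> = (\<mu> ^ q ^ N) ^ q ^ s" using \<open>\<mu> ^ q ^ N = \<mu>\<close> by simp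
    also have "\<dots> = (\<mu> ^ q ^ (N - 1 + s)) ^ q"
      using \<open>N \<ge> 1\<close> by (simp flip: power_mult power_add power_Suc2)
    finally show "\<eta> \<in> (\<lambda>\<xi>. \<xi> ^ q) ` orbitC q \<mu>" by (auto simp: orbitC_eq)
  qed
qed

subsection \<open>Symmetric orbits force the trivial code\<close>

lemma residue_self_orthogonal_eq_0:
  assumes sym: "\<forall>\<mu>\<in>(Hprod r e :: (nat \<Rightarrow> 'k) set). orbitC q \<mu> = orbitC q (inv_tuple \<mu>)"
    and c: "c \<in> elemsA r e" "\<forall>g. c g \<in> Fq" "c \<odot> invol c = 0"
  shows "c = 0"
proof (rule fourier_inject[OF CHAR_not_dvd_e c(1) zero_in_elemsA], intro ballI)
  fix \<mu> :: "nat \<Rightarrow> 'k" assume "\<mu> \<in> Hprod r e"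
  hence "inv_tuple \<mu> \<in> orbitC q \<mu>" using sym self_mem_orbitC[of "inv_tuple \<mu>"] by simp
  then obtain s where s: "inv_tuple \<mu> = \<mu> ^ q ^ s" by (auto simp: orbitC_eq)
  have "0 = fourier (c \<odot> invol c) \<mu>" using c(3) by simp
  also have "\<dots> = fourier c \<mu> * fourier c \<mu> ^ q ^ s"
    using \<open>\<mu> \<in> Hprod r e\<close> c(2) by (simp add: fourier_mulA fourier_invol s fourier_power_q_power)
  finally show "fourier c \<mu> = fourier 0 \<mu>" by auto
qed

lemma trivial_code_self_dual: "dualA r e (trivial_code r e a t) = trivial_code r e a t"
proof (intro equalityI subsetI)
  fix x assume x: "x \<in> dualA r e (trivial_code r e a t)"
  have "x g \<in> principal_ideal (a ^ (t div 2))" if "g \<in> G" for g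
  proof -
    have "(\<lambda>i. a ^ (t div 2) * delta g i) \<in> trivial_code r e a t"
      using that by (auto simp: trivial_code_def intro: delta_in_elemsA)
    moreover have "dotA r e x (\<lambda>i. a ^ (t div 2) * delta g i) = a ^ (t div 2) * x g"
    proof -
      have "dotA r e x (\<lambda>i. a ^ (t div 2) * delta g i)
          = (\<Sum>i\<in>G. if i = g then a ^ (t div 2) * x g else 0)"
        unfolding dotA_def by (intro sum.cong refl) (simp add: delta_def)
      thus ?thesis using that by (simp add: finite_exps)
    qed
    ultimately have "a ^ (t div 2) * x g = 0" using x by (simp add: dualA_def)
    moreover have "t - t div 2 = t div 2" using t_div_2 by linarith
    ultimately show ?thesis using annihilator_power[of "t div 2" "x g"] by simp
  qed
  moreover have "x \<in> elemsA r e" using x by (simp add: dualA_def)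
  ultimately show "x \<in> trivial_code r e a t"
    unfolding trivial_code_iff by (metis elemsA_iff principal_ideal_0)
next
  fix x assume x: "x \<in> trivial_code r e a t"
  have "dotA r e x c = 0" if "c \<in> trivial_code r e a t" for c
  proof -
    have "x i * c i \<in> principal_ideal (a ^ (t div 2) * a ^ (t div 2))" for i
      using x that principal_ideal_mult[of "x i" _ "c i"] by (auto simp: trivial_code_iff)
    hence "x i * c i \<in> principal_ideal (a ^ t)" for i by (simp add: t_div_2 flip: power_add)
    hence "x i * c i = 0" for i using principal_ideal_power_ge_t by blast
    thus ?thesis by (simp add: dotA_def)
  qed
  thus "x \<in> dualA r e (trivial_code r e a t)" using x by (simp add: dualA_def trivial_code_iff)
qed

text \<open>Divide a codeword by the largest power \<open>a ^ k\<close>, \<open>k < t div 2\<close>, of \<open>a\<close>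
  dividing it; its self-orthogonality survives modulo \<open>a\<close>, so the residue vanishes.\<close>

lemma self_dual_ideal_subset_trivial_code:
  assumes sym: "\<forall>\<mu>\<in>(Hprod r e :: (nat \<Rightarrow> 'k) set). orbitC q \<mu> = orbitC q (inv_tuple \<mu>)"
    and K: "idealA r e K" "self_dual r e K"
  shows "K \<subseteq> trivial_code r e a t"
proof (rule subsetI, rule ccontr)
  fix x assume "x \<in> K" "x \<notin> trivial_code r e a t"
  have "x \<in> elemsA r e" using K(1) \<open>x \<in> K\<close> by (auto simp: idealA_def)
  have "x \<in> dualA r e K" using K(2) \<open>x \<in> K\<close> unfolding self_dual_def by blast
  hence "x \<odot> invol x = 0" using dualA_of_idealA[OF K(1)] \<open>x \<in> K\<close> by blast
  define P where "P i \<longleftrightarrow> (\<exists>g. x g \<notin> principal_ideal (a ^ i))" for i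
  have "P (t div 2)"
    using \<open>x \<notin> trivial_code r e a t\<close> \<open>x \<in> elemsA r e\<close> by (auto simp: P_def trivial_code_iff)
  moreover have "\<not> P 0" by (simp add: P_def)
  ultimately obtain k where k: "k < t div 2" "\<not> P k" "P (Suc k)"
    using ex_least_nat_less[of P "t div 2"] by blast
  obtain w where w: "w \<in> elemsA r e" "x = (\<lambda>i. a ^ k * w i)"
    using elemsA_factor[OF \<open>x \<in> elemsA r e\<close>] k(2) by (auto simp: P_def)
  obtain g0 where "x g0 \<notin> principal_ideal (a ^ Suc k)" using k(3) by (auto simp: P_def)
  hence "w g0 \<notin> principal_ideal a"
    using not_in_ideal_if_not_in_power_Suc[of "x g0" "w g0" k] w(2) by (simp add: mult.commute)
  have "x \<odot> invol x = (\<lambda>i. a ^ k * (a ^ k * (w \<odot> invol w) i))"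
    by (simp only: w(2) invol_scale mulA_scale_left mulA_scale_right)
  hence "a ^ (k + k) * (w \<odot> invol w) m = 0" for m
    using \<open>x \<odot> invol x = 0\<close> by (metis mult.assoc power_add zero_fun_apply)
  hence "(w \<odot> invol w) m \<in> principal_ideal (a ^ (t - (k + k)))" for m
    using annihilator_power[of "k + k"] k(1) t_div_2 by simp
  hence "(w \<odot> invol w) m \<in> principal_ideal a" for m
    using principal_ideal_power_antimono[of 1 "t - (k + k)" _ a] k(1) t_div_2 by simp
  hence "(\<phi> \<circ> w) \<odot> invol (\<phi> \<circ> w) = 0"
    by (simp add: phi_comp_eq_0_iff flip: phi_mulA phi_invol)
  hence "\<phi> \<circ> w = 0"
    using residue_self_orthogonal_eq_0[OF sym phi_comp_in_elemsA[OF w(1)]] by auto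
  thus False using \<open>w g0 \<notin> principal_ideal a\<close> by (simp add: phi_comp_eq_0_iff)
qed

lemma no_nontrivial_self_dual_code:
  assumes "\<forall>\<mu>\<in>(Hprod r e :: (nat \<Rightarrow> 'k) set). orbitC q \<mu> = orbitC q (inv_tuple \<mu>)"
  shows "\<not> nontrivial_self_dual_code_exists r e a t"
proof
  assume "nontrivial_self_dual_code_exists r e a t"
  then obtain K where K: "idealA r e K" "self_dual r e K" "K \<noteq> trivial_code r e a t"
    by (auto simp: nontrivial_self_dual_code_exists_def)
  have sub: "K \<subseteq> trivial_code r e a t"
    by (rule self_dual_ideal_subset_trivial_code[OF assms K(1,2)])
  hence "trivial_code r e a t \<subseteq> dualA r e K"
    using trivial_code_self_dual by (auto simp: dualA_def)
  thus False using sub K(2,3) unfolding self_dual_def by blast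
qed


subsection \<open>Asymmetric orbits yield non-trivial self-dual codes\<close>

lemma indicator_idempotent_orbitC_in_Fq:
  assumes "\<mu> \<in> Hprod r e"
  shows "indicator_idempotent (orbitC q \<mu>) g \<in> Fq"
proof (cases "g \<in> G")
  case True
  define C where "C = orbitC q \<mu>"
  define x where "x = (\<Sum>\<xi>\<in>C. character (inv_tuple \<xi>) g)"
  have "inj_on (\<lambda>\<xi>. \<xi> ^ q) C"
    using tuple_power_q_power_inject[of _ 1] by (auto intro: inj_onI)
  have "x ^ q = (\<Sum>\<xi>\<in>C. character (inv_tuple (\<xi> ^ q)) g)"
    using power_q_power_sum[of _ C 1] by (simp add: x_def character_power inv_tuple_power)
  also have "\<dots> = (\<Sum>\<xi>\<in>(\<lambda>\<xi>. \<xi> ^ q) ` C. character (inv_tuple \<xi>) g)"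
    by (rule sum.reindex[OF \<open>inj_on (\<lambda>\<xi>. \<xi> ^ q) C\<close>, unfolded comp_def, symmetric])
  also have "\<dots> = x" by (simp add: C_def x_def power_q_image_orbitC[OF assms])
  finally have "x \<in> Fq" by (rule mem_Fq_if_power_q)
  thus ?thesis
    using True Fq_inverse[OF Fq_of_nat] Fq_mult by (simp add: indicator_idempotent_def C_def x_def)
qed (simp add: indicator_idempotent_def rangeI[of \<phi> 0, simplified])

lemma idempotent_in_ideal_eq_0:
  assumes "u \<in> elemsA r e" "u \<odot> u = u" "\<forall>g. u g \<in> principal_ideal a"
  shows "u = 0"
proof -
  have "powA u n g \<in> principal_ideal (a ^ n)" for n g
  proof (induction n arbitrary: g)
    case (Suc n)
    thus ?case using assms(3) mulA_principal_ideal[of u a "powA u n" "a ^ n" g] by simp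
  qed simp
  moreover have "u = powA u t" using powA_idem[OF assms(1,2), of "t - 1"] t_pos by simp
  ultimately show ?thesis using principal_ideal_power_ge_t by (metis order_refl zero_fun_apply ext)
qed

lemma lift_idempotent:
  assumes "c \<in> elemsA r e" "\<forall>g. c g \<in> Fq" "c \<odot> c = c"
  shows "\<exists>f\<in>elemsA r e. f \<odot> f = f \<and> \<phi> \<circ> f = c"
proof -
  define w where "w g = (if g \<in> G then inv \<phi> (c g) else 0)" for g
  have "\<phi> \<circ> w = c"
    using assms(1,2) by (auto simp: w_def fun_eq_iff elemsA_iff f_inv_into_f)
  obtain k where "k \<ge> 1" "powA w k \<odot> powA w k = powA w k"
    using exists_idempotent_powA[OF finite_ring] by blast
  moreover have "\<phi> \<circ> powA w k = c"
    using powA_idem[OF assms(1,3), of "k - 1"] \<open>k \<ge> 1\<close> by (simp add: phi_powA \<open>\<phi> \<circ> w = c\<close>)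
  ultimately show ?thesis using powA_in_elemsA by blast
qed

lemma lift_orthogonal:
  assumes "f \<in> elemsA r e" "f \<odot> f = f" "\<phi> \<circ> (f \<odot> invol f) = 0"
  shows "f \<odot> invol f = 0"
proof (rule idempotent_in_ideal_eq_0)
  have "invol f \<odot> invol f = invol f" by (simp flip: invol_mulA add: assms(2))
  thus "f \<odot> invol f \<odot> (f \<odot> invol f) = f \<odot> invol f"
    using assms(2) by (simp only: mulA_mulA_swap)
  show "\<forall>g. (f \<odot> invol f) g \<in> principal_ideal a" using assms(3) by (simp add: phi_comp_eq_0_iff)
qed simp

text \<open>With \<open>f\<close> an idempotent orthogonal to its involute, \<open>f\<close>, \<open>invol f\<close> and
  \<open>one_A - f - invol f\<close> are orthogonal idempotents summing to \<open>one_A\<close>; the self-dual code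
  consists of the \<open>f\<close>-component, no \<open>invol f\<close>-component, and the \<open>a ^ (t div 2)\<close>-multiples
  in the remaining component.\<close>

definition idempotent_code :: "((nat \<Rightarrow> nat) \<Rightarrow> 'r) \<Rightarrow> ((nat \<Rightarrow> nat) \<Rightarrow> 'r) set" where
  "idempotent_code f = {x \<in> elemsA r e. x \<odot> invol f = 0 \<and>
     (\<forall>g. (x \<odot> (one_A - f - invol f)) g \<in> principal_ideal (a ^ (t div 2)))}"

lemma idealA_idempotent_code: "idealA r e (idempotent_code f)"
  unfolding idealA_def
proof (intro conjI ballI)
  show "idempotent_code f \<subseteq> elemsA r e" by (auto simp: idempotent_code_def)
  have "(\<lambda>_. 0) = (0 :: (nat \<Rightarrow> nat) \<Rightarrow> 'r)" by (simp add: fun_eq_iff)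
  thus "(\<lambda>_. 0) \<in> idempotent_code f" by (simp add: idempotent_code_def)
next
  fix x y assume "x \<in> idempotent_code f" "y \<in> idempotent_code f"
  moreover have "(\<lambda>i. x i + y i) = x + y" by (simp add: fun_eq_iff)
  ultimately show "(\<lambda>i. x i + y i) \<in> idempotent_code f"
    by (auto simp: idempotent_code_def mulA_add_left elemsA_iff intro: principal_ideal_add)
next
  fix x y :: "(nat \<Rightarrow> nat) \<Rightarrow> 'r" assume "x \<in> idempotent_code f" "y \<in> elemsA r e"
  thus "y \<odot> x \<in> idempotent_code f"
    by (auto simp: idempotent_code_def mulA_assoc intro: mulA_principal_ideal_right)
qed

lemma idempotent_in_idempotent_code:
  assumes "f \<in> elemsA r e" "f \<odot> f = f" "f \<odot> invol f = 0"
  shows "f \<in> idempotent_code f"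
  using assms orthogonal_idempotent_complement(2)[OF assms] by (simp add: idempotent_code_def)

lemma idempotent_code_orthogonal:
  assumes f: "f \<in> elemsA r e" "f \<odot> f = f" "f \<odot> invol f = 0"
    and x: "x \<in> idempotent_code f" and c: "c \<in> idempotent_code f"
  shows "x \<odot> invol c = 0"
proof -
  define u where "u = one_A - f - invol f"
  note compl = orthogonal_idempotent_complement[OF f, folded u_def]
  have K: "y \<in> idempotent_code f \<longleftrightarrow>
      y \<in> elemsA r e \<and> y \<odot> invol f = 0 \<and> (\<forall>g. (y \<odot> u) g \<in> principal_ideal (a ^ (t div 2)))" for y
    by (simp add: idempotent_code_def u_def)
  have "invol c \<odot> f = invol (c \<odot> invol f)" using f(1) by (simp add: invol_mulA)
  hence part_f: "x \<odot> (invol c \<odot> f) = 0" using c by (simp add: K)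
  have part_f': "x \<odot> (invol c \<odot> invol f) = 0" using x by (simp add: K mulA_left_commute[of x])
  have "x \<odot> (invol c \<odot> u) = (x \<odot> invol c) \<odot> (u \<odot> u)" by (simp only: compl(4) mulA_assoc)
  also have "\<dots> = (x \<odot> u) \<odot> (invol c \<odot> u)" by (rule mulA_mulA_swap)
  also have "\<dots> = (x \<odot> u) \<odot> invol (c \<odot> u)" by (simp only: invol_mulA compl(5))
  finally have u_part: "x \<odot> (invol c \<odot> u) = (x \<odot> u) \<odot> invol (c \<odot> u)" .
  have "((x \<odot> u) \<odot> invol (c \<odot> u)) g \<in> principal_ideal (a ^ (t div 2) * a ^ (t div 2))" for g
    using x c by (intro mulA_principal_ideal invol_principal_ideal) (auto simp: K)
  hence part_u: "x \<odot> (invol c \<odot> u) = 0"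
    unfolding u_part using principal_ideal_power_ge_t[of t] t_div_2
    by (auto simp: fun_eq_iff simp flip: power_add)
  have "x \<odot> invol c = x \<odot> (invol c \<odot> f) + x \<odot> (invol c \<odot> invol f) + x \<odot> (invol c \<odot> u)"
    by (subst compl(7)[OF invol_in_elemsA]) (simp add: mulA_add_right)
  thus ?thesis using part_f part_f' part_u by simp
qed

lemma dualA_idempotent_code_subset:
  assumes f: "f \<in> elemsA r e" "f \<odot> f = f" "f \<odot> invol f = 0"
  shows "dualA r e (idempotent_code f) \<subseteq> idempotent_code f"
proof
  fix x assume x: "x \<in> dualA r e (idempotent_code f)"
  define u where "u = one_A - f - invol f"
  note compl = orthogonal_idempotent_complement[OF f, folded u_def]
  have K: "y \<in> idempotent_code f \<longleftrightarrow>
      y \<in> elemsA r e \<and> y \<odot> invol f = 0 \<and> (\<forall>g. (y \<odot> u) g \<in> principal_ideal (a ^ (t div 2)))" for y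
    by (simp add: idempotent_code_def u_def)
  note dual = dualA_of_idealA[OF idealA_idempotent_code, of x f]
  have "x \<odot> invol f = 0" using x dual idempotent_in_idempotent_code[OF f] by blast
  define v where "v = (\<lambda>i. a ^ (t div 2) * u i)"
  have "u \<odot> invol f = 0" using compl(3) by (simp add: mulA_commute[of u "invol f"])
  hence "v \<odot> invol f = 0" by (simp add: v_def mulA_scale_left fun_eq_iff)
  moreover have "(v \<odot> u) g \<in> principal_ideal (a ^ (t div 2))" for g
    using compl(4) principal_ideal_mult_right[OF principal_ideal_generator]
    by (simp add: v_def mulA_scale_left)
  ultimately have "v \<in> idempotent_code f" using compl(6) by (simp add: K v_def elemsA_iff)
  hence "x \<odot> invol v = 0" using x dual by blast
  hence "a ^ (t div 2) * (x \<odot> u) g = 0" for g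
    using compl(5) by (simp add: v_def invol_scale mulA_scale_right fun_eq_iff)
  hence "(x \<odot> u) g \<in> principal_ideal (a ^ (t div 2))" for g
    using annihilator_power[of "t div 2"] t_div_2 by (metis add_diff_cancel_right' le_add2)
  thus "x \<in> idempotent_code f" using x \<open>x \<odot> invol f = 0\<close> dual K by blast
qed

lemma idempotent_code_self_dual:
  assumes "f \<in> elemsA r e" "f \<odot> f = f" "f \<odot> invol f = 0"
  shows "self_dual r e (idempotent_code f)"
proof -
  have "x \<in> dualA r e (idempotent_code f)" if "x \<in> idempotent_code f" for x
  proof -
    have "x \<in> elemsA r e" using that by (simp add: idempotent_code_def)
    thus ?thesis using idempotent_code_orthogonal[OF assms that]
      dualA_of_idealA[OF idealA_idempotent_code] by blast
  qed
  thus ?thesis using dualA_idempotent_code_subset[OF assms] unfolding self_dual_def by blast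
qed

lemma idempotent_notin_trivial_code:
  assumes "f \<odot> f = f" "f \<noteq> 0"
  shows "f \<notin> trivial_code r e a t"
proof
  assume "f \<in> trivial_code r e a t"
  hence "(f \<odot> f) g \<in> principal_ideal (a ^ (t div 2) * a ^ (t div 2))" for g
    by (intro mulA_principal_ideal) (auto simp: trivial_code_iff)
  hence "f \<odot> f = 0"
    using principal_ideal_power_ge_t[of t] t_div_2 by (auto simp: fun_eq_iff simp flip: power_add)
  thus False using assms by simp
qed

lemma nontrivial_self_dual_code_if_asymmetric:
  fixes \<mu> :: "nat \<Rightarrow> 'k"
  assumes "\<mu> \<in> Hprod r e" "orbitC q \<mu> \<noteq> orbitC q (inv_tuple \<mu>)"
  shows "nontrivial_self_dual_code_exists r e a t"
proof -
  define c where "c = indicator_idempotent (orbitC q \<mu>)"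
  have C: "orbitC q \<mu> \<subseteq> Hprod r e" using orbitC_subset_Hprod[OF assms(1)] .
  have c: "c \<in> elemsA r e" "\<forall>g. c g \<in> Fq" "c \<odot> c = c" "c \<odot> invol c = 0"
    using indicator_idempotent_in_elemsA indicator_idempotent_orbitC_in_Fq[OF assms(1)]
      indicator_idempotent_idem[OF CHAR_not_dvd_e C]
      indicator_idempotent_orth[OF CHAR_not_dvd_e C] inv_tuple_notin_orbitC[OF assms]
    by (simp_all add: c_def)
  have "c \<noteq> 0"
    using fourier_indicator_idempotent[OF CHAR_not_dvd_e C assms(1)] self_mem_orbitC[of \<mu>]
    by (auto simp: c_def)
  obtain f where f: "f \<in> elemsA r e" "f \<odot> f = f" "\<phi> \<circ> f = c"
    using lift_idempotent[OF c(1-3)] by blast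
  have "f \<odot> invol f = 0" using f c(4) by (intro lift_orthogonal) (simp_all add: phi_mulA phi_invol)
  moreover have "f \<noteq> 0" using f(3) \<open>c \<noteq> 0\<close> by auto
  ultimately have "idempotent_code f \<noteq> trivial_code r e a t"
    using idempotent_notin_trivial_code idempotent_in_idempotent_code f(1,2) by blast
  thus ?thesis
    using idealA_idempotent_code idempotent_code_self_dual f \<open>f \<odot> invol f = 0\<close>
    unfolding nontrivial_self_dual_code_exists_def by blast
qed

end

theorem mainTheorem11:
  fixes a :: "'r::comm_ring_1" and t p q r :: nat and e :: "nat \<Rightarrow> nat"
    and \<phi> :: "'r \<Rightarrow> 'k::alg_closed_field"
  assumes chain: "finite_chain_ring TYPE('r)"
    and max: "is_maximal_ideal (principal_ideal a)"
    and nil: "nilpotency_index a t" and teven: "even t"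
    and qdef: "q = residue_card a"
    and pprime: "prime p" and pchar: "of_nat p \<in> principal_ideal a"
    and epos: "\<forall>k<r. 0 < e k" and ecop: "\<forall>k<r. \<not> p dvd e k"
    and clos: "alg_closure_of_residue \<phi> a"
  shows "nontrivial_self_dual_code_exists r e a t \<longleftrightarrow>
         (\<exists>\<mu> \<in> (Hprod r e :: (nat \<Rightarrow> 'k) set). orbitC q \<mu> \<noteq> orbitC q (inv_tuple \<mu>))"
proof -
  interpret abelian_code_setting a t \<phi> p q r e
    by unfold_locales (fact chain max nil qdef pprime pchar clos epos teven ecop)+
  show ?thesis
    using no_nontrivial_self_dual_code nontrivial_self_dual_code_if_asymmetric by blast
qed

end
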